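(* Let $\mathcal{X}$ be a fuzzy random variable with values in $\mathcal{F}_c(\mathbb{R})$ such that $\mathrm{E}[\|\mathcal{X}_0\|]<\infty$. Then $\mathrm{Med}(\mathcal{X};D_1)=\mathrm{Med}(\mathcal{X};D_{FT})$.
   Context: $\mathcal{F}_c(\mathbb{R})$ is the set of functions $A:\mathbb{R}\to[0,1]$ whose $\alpha$-levels $A_\alpha=\{x:A(x)\ge\alpha\}$ ($\alpha\in(0,1]$) and $A_0=\overline{\{x:A(x)>0\}}$ are non-empty compact intervals. Support function: $s_A(u,\alpha)=\sup\{uv:v\in A_\alpha\}$, $u\in\{-1,1\}$, $\alpha\in[0,1]$. A fuzzy random variable on $(\Omega,\mathcal{A},\mathbb{P})$ is a map $\mathcal{X}:\Omega\to\mathcal{F}_c(\mathbb{R})$ with each $\omega\mapsto\mathcal{X}(\omega)_\alpha$ a random compact set; $s_{\mathcal{X}}(u,\alpha)(\omega)=s_{\mathcal{X}(\omega)}(u,\alpha)$; $\|\mathcal{X}_0\|=\sup\{|x|:x\in\mathcal{X}(\cdot)_0\}$. $\rho_1(A,B)=\int_{\{-1,1\}}\int_0^1|s_A(u,\alpha)-s_B(u,\alpha)|\,d\alpha\,d\mathcal{V}(u)$, $\mathcal{V}$ uniform on $\{-1,1\}$. $D_1(A;\mathcal{X})=(1+\mathrm{E}[\rho_1(A,\mathcal{X})])^{-1}$. $D_{FT}(A;\mathcal{X})=\inf_{u\in\{-1,1\},\alpha\in[0,1]}\min\big(\mathbb{P}[s_{\mathcal{X}}(u,\alpha)\le s_A(u,\alpha)],\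 \mathbb{P}[s_{\mathcal{X}}(u,\alpha)\ge s_A(u,\alpha)]\big)$. For a depth $D$, $\mathrm{Med}(\mathcal{X};D)=\{A\in\mathcal{F}_c(\mathbb{R}):D(A;\mathcal{X})=\max_{U\in\mathcal{F}_c(\mathbb{R})}D(U;\mathcal{X})\}$. *)

theory Defs
  imports "HOL-Probability.Probability"
begin

text \<open>Fuzzy sets on the reals are functions real \<Rightarrow> real (values in [0,1] are required by fuzzy_Fc).\<close>

definition alpha_level :: "(real \<Rightarrow> real) \<Rightarrow> real \<Rightarrow> real set" where
  "alpha_level A \<alpha> = (if \<alpha> = 0 then closure {x. A x > 0} else {x. A x \<ge> \<alpha>})"

definition fuzzy_Fc :: "(real \<Rightarrow> real) \<Rightarrow> bool" where
  "fuzzy_Fc A \<longleftrightarrow> (\<forall>x. 0 \<le> A x \<and> A x \<le> 1) \<and>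
     (\<forall>\<alpha>\<in>{0..1}. \<exists>a b. a \<le> b \<and> alpha_level A \<alpha> = {a..b})"

definition supp_fun :: "(real \<Rightarrow> real) \<Rightarrow> real \<Rightarrow> real \<Rightarrow> real" where
  "supp_fun A u \<alpha> = Sup ((\<lambda>v. u * v) ` alpha_level A \<alpha>)"

definition random_compact_set :: "'a measure \<Rightarrow> ('a \<Rightarrow> real set) \<Rightarrow> bool" where
  "random_compact_set M K \<longleftrightarrow> (\<forall>\<omega>\<in>space M. compact (K \<omega>) \<and> K \<omega> \<noteq> {}) \<and>
     (\<forall>C. compact C \<longrightarrow> {\<omega>\<in>space M. K \<omega> \<inter> C \<noteq> {}} \<in> sets M)"

definition fuzzy_rv :: "'a measure \<Rightarrow> ('a \<Rightarrow> real \<Rightarrow> real) \<Rightarrow> bool" where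
  "fuzzy_rv M X \<longleftrightarrow> (\<forall>\<omega>\<in>space M. fuzzy_Fc (X \<omega>)) \<and>
     (\<forall>\<alpha>\<in>{0..1}. random_compact_set M (\<lambda>\<omega>. alpha_level (X \<omega>) \<alpha>))"

definition norm0 :: "('a \<Rightarrow> real \<Rightarrow> real) \<Rightarrow> 'a \<Rightarrow> real" where
  "norm0 X \<omega> = Sup (abs ` alpha_level (X \<omega>) 0)"

text \<open>rho_1 metric, V uniform on {-1,1}.\<close>
definition rho1 :: "(real \<Rightarrow> real) \<Rightarrow> (real \<Rightarrow> real) \<Rightarrow> real" where
  "rho1 A B = (\<Sum>u\<in>{-1, 1::real}.
      (1/2) * integral {0..1} (\<lambda>\<alpha>. \<bar>supp_fun A u \<alpha> - supp_fun B u \<alpha>\<bar>))"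

text \<open>D_1(A;X) = (1 + E[rho_1(A,X)])^{-1}; the expectation of the nonnegative variable is
  the nonnegative integral, so the depth lives in ennreal (inverse of infinity is 0).\<close>
definition D1 :: "'a measure \<Rightarrow> ('a \<Rightarrow> real \<Rightarrow> real) \<Rightarrow> (real \<Rightarrow> real) \<Rightarrow> ennreal" where
  "D1 M X A = inverse (1 + (\<integral>\<^sup>+ \<omega>. ennreal (rho1 A (X \<omega>)) \<partial>M))"

definition D_FT :: "'a measure \<Rightarrow> ('a \<Rightarrow> real \<Rightarrow> real) \<Rightarrow> (real \<Rightarrow> real) \<Rightarrow> real" where
  "D_FT M X A = (INF p\<in>{-1, 1::real} \<times> {0..1::real}.
      min (measure M {\<omega>\<in>space M. supp_fun (X \<omega>) (fst p) (snd p) \<le> supp_fun A (fst p) (snd p)})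
          (measure M {\<omega>\<in>space M. supp_fun (X \<omega>) (fst p) (snd p) \<ge> supp_fun A (fst p) (snd p)}))"

definition Med :: "((real \<Rightarrow> real) \<Rightarrow> 'b::order) \<Rightarrow> (real \<Rightarrow> real) set" where
  "Med D = {A. fuzzy_Fc A \<and> (\<forall>U. fuzzy_Fc U \<longrightarrow> D U \<le> D A)}"

end

theory Submission
  imports Defs
begin

text \<open>
  Everything is governed by the real random variables \<open>s\<^sub>X(u,\<alpha>)\<close>. At a median of a real
  random variable the halfspace depth is at least 1/2 and maximal, and elsewhere it is below 1/2;
  hence \<open>Med(X;D\<^sub>F\<^sub>T)\<close> consists of the fuzzy sets \<open>A\<close> such that every \<open>s\<^sub>A(u,\<alpha>)\<close> is a median
  of \<open>s\<^sub>X(u,\<alpha>)\<close>, provided such an \<open>A\<close> exists. By Tonelli,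
  \<open>E \<rho>\<^sub>1(A,X) = \<integral>\<^sub>0\<^sup>1 \<Sum>\<^sub>u E|s\<^sub>X(u,\<alpha>) - s\<^sub>A(u,\<alpha>)|/2 d\<alpha>\<close>, and medians are exactly the minimisers of the
  mean absolute deviation; so the same \<open>A\<close> maximise \<open>D\<^sub>1\<close>, while any maximiser has median
  support functions for almost every \<open>\<alpha>\<close>, hence for all \<open>\<alpha>\<close> by monotonicity and
  left-continuity (in probability) in \<open>\<alpha>\<close>. Existence: choosing upper medians level by level
  (and their right limit at \<open>\<alpha> = 0\<close>) yields two functions with the properties that characterise
  support functions, so they are the support functions of some fuzzy set in \<open>\<F>\<^sub>c(\<real>)\<close>.
\<close>

section \<open>Support functions of fuzzy sets\<close>

text \<open>Antitone on \<open>[0,1]\<close>, left-continuous on \<open>(0,1]\<close>, right-continuous at 0: the properties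
  characterising the functions \<open>\<alpha> \<mapsto> s\<^sub>A(u,\<alpha>)\<close> (see \<open>support_profile_supp_fun\<close> and
  \<open>fuzzy_Fc_of_support_profiles\<close>).\<close>

definition support_profile :: "(real \<Rightarrow> real) \<Rightarrow> bool" where
  "support_profile f \<longleftrightarrow>
     (\<forall>a b. 0 \<le> a \<longrightarrow> a \<le> b \<longrightarrow> b \<le> 1 \<longrightarrow> f b \<le> f a) \<and>
     (\<forall>g\<in>{0<..1}. \<forall>x. (\<forall>b\<in>{0<..<g}. x \<le> f b) \<longrightarrow> x \<le> f g) \<and>
     (\<forall>x. (\<forall>b\<in>{0<..1}. f b \<le> x) \<longrightarrow> f 0 \<le> x)"

lemma support_profile_antimono:
  "support_profile f \<Longrightarrow> 0 \<le> a \<Longrightarrow> a \<le> b \<Longrightarrow> b \<le> 1 \<Longrightarrow> f b \<le> f a"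
  unfolding support_profile_def by blast

lemma support_profile_left_cont:
  "support_profile f \<Longrightarrow> g \<in> {0<..1} \<Longrightarrow> (\<And>b. b \<in> {0<..<g} \<Longrightarrow> x \<le> f b) \<Longrightarrow> x \<le> f g"
  unfolding support_profile_def by blast

lemma support_profile_at_0:
  "support_profile f \<Longrightarrow> (\<And>b. b \<in> {0<..1} \<Longrightarrow> f b \<le> x) \<Longrightarrow> f 0 \<le> x"
  unfolding support_profile_def by blast

lemma support_profile_left_cont_less:
  assumes f: "support_profile f" and g: "g \<in> {0<..1}" and y: "f g < y"
  obtains b where "b \<in> {0<..<g}" "f b < y"
proof -
  have "\<not> y \<le> f g" using y by simp
  then show ?thesis using support_profile_left_cont[OF f g, of y] that by (meson not_le)
qed

lemma support_profile_at_0_less: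
  assumes f: "support_profile f" and y: "y < f 0"
  obtains b where "b \<in> {0<..1}" "y < f b"
proof -
  have "\<not> f 0 \<le> y" using y by simp
  then show ?thesis using support_profile_at_0[OF f, of y] that by (meson not_le)
qed

lemma support_profile_Sup:
  fixes K :: "real \<Rightarrow> real set"
  assumes intv: "\<And>a. a \<in> {0..1} \<Longrightarrow> \<exists>l h. l \<le> h \<and> K a = {l..h}"
    and antimono: "\<And>a b. 0 \<le> a \<Longrightarrow> a \<le> b \<Longrightarrow> K b \<subseteq> K a"
    and left_cont: "\<And>g. g \<in> {0<..1} \<Longrightarrow> (\<Inter>b\<in>{0<..<g}. K b) \<subseteq> K g"
    and at_0: "K 0 \<subseteq> closure (\<Union>b\<in>{0<..1}. K b)"
  shows "support_profile (\<lambda>a. Sup (K a))"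
  unfolding support_profile_def
proof (intro conjI allI impI ballI)
  fix a b :: real assume ab: "0 \<le> a" "a \<le> b" "b \<le> 1"
  obtain l h where "l \<le> h" "K a = {l..h}" using intv[of a] ab by auto
  moreover obtain l' h' where "l' \<le> h'" "K b = {l'..h'}" using intv[of b] ab by auto
  ultimately show "Sup (K b) \<le> Sup (K a)" using antimono[OF ab(1,2)] by auto
next
  fix g x assume g: "g \<in> {0<..1}" and x: "\<forall>b\<in>{0<..<g}. x \<le> Sup (K b)"
  obtain l h where lh: "l \<le> h" "K g = {l..h}" using intv[of g] g by auto
  have "max x l \<in> (\<Inter>b\<in>{0<..<g}. K b)"
  proof
    fix b assume b: "b \<in> {0<..<g}"
    obtain l' h' where "l' \<le> h'" "K b = {l'..h'}" using intv[of b] b g by auto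
    moreover have "K g \<subseteq> K b" using antimono[of b g] b by auto
    ultimately show "max x l \<in> K b" using x b lh by (auto dest!: bspec[of _ _ b])
  qed
  then show "x \<le> Sup (K g)" using left_cont[OF g] lh by auto
next
  fix x assume x: "\<forall>b\<in>{0<..1}. Sup (K b) \<le> x"
  have "(\<Union>b\<in>{0<..1}. K b) \<subseteq> {..x}"
  proof (intro UN_least)
    fix b :: real assume b: "b \<in> {0<..1}"
    then obtain l h where "l \<le> h" "K b = {l..h}" using intv[of b] by auto
    then show "K b \<subseteq> {..x}" using x b by (auto dest!: bspec[of _ _ b])
  qed
  then have "K 0 \<subseteq> {..x}" using at_0 closure_minimal[OF _ closed_atMost] by blast
  moreover obtain l h where "l \<le> h" "K 0 = {l..h}" using intv[of 0] by auto
  ultimately show "Sup (K 0) \<le> x" by auto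
qed

lemma alpha_level_antimono: "0 \<le> a \<Longrightarrow> a \<le> b \<Longrightarrow> alpha_level A b \<subseteq> alpha_level A a"
  by (auto simp: alpha_level_def intro: closure_subset[THEN subsetD])

lemma alpha_level_left_cont:
  assumes "0 < g"
  shows "(\<Inter>b\<in>{0<..<g}. alpha_level A b) \<subseteq> alpha_level A g"
proof
  fix x assume x: "x \<in> (\<Inter>b\<in>{0<..<g}. alpha_level A b)"
  have "g \<le> A x"
    by (rule dense_le_bounded[OF assms]) (use x in \<open>auto simp: alpha_level_def\<close>)
  then show "x \<in> alpha_level A g" using assms by (simp add: alpha_level_def)
qed

lemma alpha_level_0_subset:
  assumes "\<And>x. A x \<le> 1"
  shows "alpha_level A 0 \<subseteq> closure (\<Union>b\<in>{0<..1}. alpha_level A b)"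
proof -
  have "{x. A x > 0} \<subseteq> (\<Union>b\<in>{0<..1}. alpha_level A b)"
  proof
    fix x assume "x \<in> {x. A x > 0}"
    then have "A x \<in> {0<..1}" "x \<in> alpha_level A (A x)" using assms[of x] by (auto simp: alpha_level_def)
    then show "x \<in> (\<Union>b\<in>{0<..1}. alpha_level A b)" by blast
  qed
  then show ?thesis by (simp add: alpha_level_def closure_mono)
qed

lemma supp_fun_eq_interval:
  assumes "alpha_level A a = {l..h}" "l \<le> h"
  shows "supp_fun A 1 a = h" "supp_fun A (-1) a = - l"
  using assms by (simp_all add: supp_fun_def)

lemma alpha_level_eq_supp_fun:
  assumes "fuzzy_Fc A" "a \<in> {0..1}"
  shows "alpha_level A a = {- supp_fun A (-1) a..supp_fun A 1 a}"
    and "- supp_fun A (-1) a \<le> supp_fun A 1 a"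
proof -
  obtain l h where "l \<le> h" "alpha_level A a = {l..h}" using assms unfolding fuzzy_Fc_def by blast
  then show "alpha_level A a = {- supp_fun A (-1) a..supp_fun A 1 a}"
    and "- supp_fun A (-1) a \<le> supp_fun A 1 a" using supp_fun_eq_interval by auto
qed

lemma support_profile_supp_fun:
  assumes A: "fuzzy_Fc A" and u: "u \<in> {-1, 1}"
  shows "support_profile (supp_fun A u)"
proof -
  let ?f = "\<lambda>v. u * v"
  have lin: "linear ?f" by (auto intro: linearI simp: algebra_simps)
  have bij: "bij ?f" by (rule o_bij[of ?f]) (use u in auto)
  have "support_profile (\<lambda>a. Sup (?f ` alpha_level A a))"
  proof (rule support_profile_Sup)
    fix a :: real assume "a \<in> {0..1}"
    then obtain l h where "l \<le> h" "alpha_level A a = {l..h}" using A unfolding fuzzy_Fc_def by blast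
    then show "\<exists>l h. l \<le> h \<and> ?f ` alpha_level A a = {l..h}" using u by auto
  next
    fix a b :: real assume "0 \<le> a" "a \<le> b"
    then show "?f ` alpha_level A b \<subseteq> ?f ` alpha_level A a" by (intro image_mono alpha_level_antimono)
  next
    fix g :: real assume g: "g \<in> {0<..1}"
    have "(\<Inter>b\<in>{0<..<g}. ?f ` alpha_level A b) = ?f ` (\<Inter>b\<in>{0<..<g}. alpha_level A b)"
      using bij by (rule bij_image_INT[symmetric])
    then show "(\<Inter>b\<in>{0<..<g}. ?f ` alpha_level A b) \<subseteq> ?f ` alpha_level A g"
      using alpha_level_left_cont[of g A] g by auto
  next
    have "?f ` alpha_level A 0 \<subseteq> ?f ` closure (\<Union>b\<in>{0<..1}. alpha_level A b)"
      using A by (intro image_mono alpha_level_0_subset) (simp add: fuzzy_Fc_def)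
    also have "\<dots> = closure (\<Union>b\<in>{0<..1}. ?f ` alpha_level A b)"
      by (simp add: closure_injective_linear_image[OF lin bij_is_inj[OF bij]] image_UN)
    finally show "?f ` alpha_level A 0 \<subseteq> closure (\<Union>b\<in>{0<..1}. ?f ` alpha_level A b)" .
  qed
  then show ?thesis by (simp add: supp_fun_def[abs_def])
qed

lemma supp_fun_sum_nonneg: "fuzzy_Fc A \<Longrightarrow> a \<in> {0..1} \<Longrightarrow> 0 \<le> supp_fun A 1 a + supp_fun A (-1) a"
  using alpha_level_eq_supp_fun(2) by fastforce

lemma closure_UN_support_profiles:
  assumes f: "support_profile f" and g: "support_profile g"
    and fg: "\<And>a. a \<in> {0..1} \<Longrightarrow> 0 \<le> f a + g a"
  shows "closure (\<Union>b\<in>{0<..1}. {- g b..f b}) = {- g 0..f 0}"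
    (is "closure ?I = _")
proof
  have "?I \<subseteq> {- g 0..f 0}"
  proof (intro UN_least)
    fix b :: real assume "b \<in> {0<..1}"
    then show "{- g b..f b} \<subseteq> {- g 0..f 0}"
      using support_profile_antimono[OF f, of 0 b] support_profile_antimono[OF g, of 0 b] by auto
  qed
  then show "closure ?I \<subseteq> {- g 0..f 0}" by (rule closure_minimal) simp
next
  have bdd: "bdd_above (f ` {0<..1})" "bdd_below ((\<lambda>b. - g b) ` {0<..1})"
    using support_profile_antimono[OF f, of 0] support_profile_antimono[OF g, of 0]
    by (auto intro!: bdd_aboveI2[where M="f 0"] bdd_belowI2[where m="- g 0"])
  have "f 0 = Sup (f ` {0<..1})"
  proof (rule cSup_eq_non_empty[symmetric])
    show "\<And>x. x \<in> f ` {0<..1} \<Longrightarrow> x \<le> f 0" using support_profile_antimono[OF f, of 0] by auto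
    show "\<And>y. (\<And>x. x \<in> f ` {0<..1} \<Longrightarrow> x \<le> y) \<Longrightarrow> f 0 \<le> y"
      using support_profile_at_0[OF f] by blast
  qed simp
  then have "f 0 \<in> closure (f ` {0<..1})" using closure_contains_Sup[OF _ bdd(1)] by simp
  moreover have "- g 0 = Inf ((\<lambda>b. - g b) ` {0<..1})"
  proof (rule cInf_eq_non_empty[symmetric])
    show "\<And>x. x \<in> (\<lambda>b. - g b) ` {0<..1} \<Longrightarrow> - g 0 \<le> x"
      using support_profile_antimono[OF g, of 0] by auto
    fix y assume y: "\<And>x. x \<in> (\<lambda>b. - g b) ` {0<..1} \<Longrightarrow> y \<le> x"
    have "g 0 \<le> - y"
    proof (rule support_profile_at_0[OF g])
      fix b :: real assume "b \<in> {0<..1}"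
      then have "y \<le> - g b" by (intro y) auto
      then show "g b \<le> - y" by simp
    qed
    then show "y \<le> - g 0" by simp
  qed simp
  then have "- g 0 \<in> closure ((\<lambda>b. - g b) ` {0<..1})" using closure_contains_Inf[OF _ bdd(2)] by simp
  moreover have "f ` {0<..1} \<subseteq> ?I" "(\<lambda>b. - g b) ` {0<..1} \<subseteq> ?I"
  proof (safe intro!: image_subsetI)
    fix b :: real assume b: "b \<in> {0<..1}"
    then have "f b \<in> {- g b..f b}" "- g b \<in> {- g b..f b}" using fg[of b] by auto
    then show "f b \<in> ?I" "- g b \<in> ?I" using b by blast+
  qed
  ultimately have ends: "f 0 \<in> closure ?I" "- g 0 \<in> closure ?I"
    using closure_mono by blast+
  have "convex ?I"
    unfolding is_interval_convex_1[symmetric] is_interval_1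
  proof (intro ballI allI impI)
    fix x y z assume "x \<in> ?I" "y \<in> ?I" and z: "x \<le> z \<and> z \<le> y"
    then obtain b1 b2 where b: "b1 \<in> {0<..1}" "b2 \<in> {0<..1}"
      and "x \<in> {- g b1..f b1}" "y \<in> {- g b2..f b2}" by blast
    moreover have "f b1 \<le> f (min b1 b2)" "f b2 \<le> f (min b1 b2)"
      "g b1 \<le> g (min b1 b2)" "g b2 \<le> g (min b1 b2)"
      using b support_profile_antimono[OF f] support_profile_antimono[OF g] by auto
    ultimately have "z \<in> {- g (min b1 b2)..f (min b1 b2)}" using z by auto
    moreover have "min b1 b2 \<in> {0<..1}" using b by auto
    ultimately show "z \<in> ?I" by blast
  qed
  then have "closed_segment (- g 0) (f 0) \<subseteq> closure ?I"
    using ends by (intro closed_segment_subset convex_closure)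
  then show "{- g 0..f 0} \<subseteq> closure ?I"
    using fg[of 0] by (simp add: closed_segment_eq_real_ivl)
qed

lemma fuzzy_Fc_of_support_profiles:
  assumes f: "support_profile f" and g: "support_profile g"
    and fg: "\<And>a. a \<in> {0..1} \<Longrightarrow> 0 \<le> f a + g a"
  obtains A where "fuzzy_Fc A" "\<And>a. a \<in> {0..1} \<Longrightarrow> supp_fun A 1 a = f a \<and> supp_fun A (-1) a = g a"
proof -
  define S where "S x = {b\<in>{0..1}. - g b \<le> x \<and> x \<le> f b}" for x
  define A where "A x = (if S x = {} then 0 else Sup (S x))" for x
  have bdd: "bdd_above (S x)" for x by (rule bdd_aboveI[of _ 1]) (auto simp: S_def)
  have range: "0 \<le> A x \<and> A x \<le> 1" for x
  proof (cases "S x = {}")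
    case False
    then obtain b where "b \<in> S x" by blast
    then have "0 \<le> b" "b \<le> Sup (S x)" using cSup_upper[OF _ bdd] by (auto simp: S_def)
    then have "0 \<le> Sup (S x)" by linarith
    moreover have "Sup (S x) \<le> 1" using False by (intro cSup_least) (auto simp: S_def)
    ultimately show ?thesis using False by (simp add: A_def)
  qed (simp add: A_def)
  have level: "a \<le> A x \<longleftrightarrow> - g a \<le> x \<and> x \<le> f a" if a: "0 < a" "a \<le> 1" for a x
  proof
    assume "- g a \<le> x \<and> x \<le> f a"
    then have "a \<in> S x" using a by (auto simp: S_def)
    then show "a \<le> A x" using cSup_upper[OF _ bdd] by (auto simp: A_def)
  next
    assume ax: "a \<le> A x"
    then have ne: "S x \<noteq> {}" using a by (auto simp: A_def)
    have Sb: "- g b \<le> x \<and> x \<le> f b" if b: "b \<in> {0<..<a}" for b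
    proof -
      have "b < Sup (S x)" using b ax ne by (simp add: A_def)
      then obtain c where "c \<in> S x" "b < c" using less_cSupD[OF ne] by blast
      then show ?thesis
        using b support_profile_antimono[OF f, of b c] support_profile_antimono[OF g, of b c]
        by (auto simp: S_def)
    qed
    have "x \<le> f a"
      by (rule support_profile_left_cont[OF f]) (use a Sb in auto)
    moreover have "- x \<le> g a"
    proof (rule support_profile_left_cont[OF g])
      fix b assume "b \<in> {0<..<a}"
      then show "- x \<le> g b" using Sb[of b] by linarith
    qed (use a in auto)
    ultimately show "- g a \<le> x \<and> x \<le> f a" by linarith
  qed
  have levels: "alpha_level A a = {- g a..f a}" if "a \<in> {0..1}" for a
  proof (cases "a = 0")
    case True
    have "{x. 0 < A x} = (\<Union>b\<in>{0<..1}. {- g b..f b})"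
    proof (intro equalityI subsetI)
      fix x assume "x \<in> {x. 0 < A x}"
      then have "A x \<in> {0<..1}" using range[of x] by auto
      then show "x \<in> (\<Union>b\<in>{0<..1}. {- g b..f b})" using level[of "A x" x] by auto
    next
      fix x assume "x \<in> (\<Union>b\<in>{0<..1}. {- g b..f b})"
      then obtain b where "b \<in> {0<..1}" "- g b \<le> x \<and> x \<le> f b" by auto
      then show "x \<in> {x. 0 < A x}" using level[of b x] by auto
    qed
    then show ?thesis using True closure_UN_support_profiles[OF f g fg] by (simp add: alpha_level_def)
  qed (use that level in \<open>auto simp: alpha_level_def\<close>)
  show ?thesis
  proof
    have "\<exists>l h. l \<le> h \<and> alpha_level A a = {l..h}" if "a \<in> {0..1}" for a
      using levels[OF that] fg[OF that] by (intro exI[of _ "- g a"] exI[of _ "f a"]) auto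
    then show "fuzzy_Fc A" using range unfolding fuzzy_Fc_def by blast
    show "supp_fun A 1 a = f a \<and> supp_fun A (-1) a = g a" if "a \<in> {0..1}" for a
      using supp_fun_eq_interval[OF levels[OF that]] fg[OF that] by (simp add: add.commute neg_le_iff_le)
  qed
qed

definition clamp01 :: "real \<Rightarrow> real" where
  "clamp01 a = max 0 (min 1 a)"

lemma clamp01_range: "clamp01 a \<in> {0..1}" and clamp01_id: "a \<in> {0..1} \<Longrightarrow> clamp01 a = a"
  and clamp01_mono: "a \<le> b \<Longrightarrow> clamp01 a \<le> clamp01 b"
  by (auto simp: clamp01_def)

definition lower_grid :: "nat \<Rightarrow> real \<Rightarrow> real" where
  "lower_grid n x = real_of_int \<lfloor>x * real (Suc n)\<rfloor> / real (Suc n)"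

lemma lower_grid_bounds:
  assumes x: "x \<in> {0..1}"
  shows "0 \<le> lower_grid n x" "lower_grid n x \<le> x" "x - 1 / real (Suc n) < lower_grid n x"
proof -
  have p: "0 < real (Suc n)" by simp
  show "0 \<le> lower_grid n x" using x by (simp add: lower_grid_def)
  have "real_of_int \<lfloor>x * real (Suc n)\<rfloor> \<le> x * real (Suc n)" by (rule of_int_floor_le)
  then show "lower_grid n x \<le> x" using p by (simp add: lower_grid_def divide_le_eq)
  have "x * real (Suc n) - 1 < real_of_int \<lfloor>x * real (Suc n)\<rfloor>" by linarith
  then have "(x * real (Suc n) - 1) / real (Suc n) < lower_grid n x"
    unfolding lower_grid_def using p by (intro divide_strict_right_mono) auto
  then show "x - 1 / real (Suc n) < lower_grid n x" using p by (simp add: diff_divide_distrib)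
qed

lemma support_profile_lower_grid_tendsto:
  assumes s: "support_profile s" and x: "x \<in> {0..1}"
  shows "(\<lambda>n. s (lower_grid n x)) \<longlonglongrightarrow> s x"
proof (cases "x = 0")
  case True
  then show ?thesis by (simp add: lower_grid_def)
next
  case False
  then have x': "x \<in> {0<..1}" using x by auto
  show ?thesis
  proof (rule order_tendstoI)
    fix y assume "y < s x"
    moreover have "s x \<le> s (lower_grid n x)" for n
      using support_profile_antimono[OF s] lower_grid_bounds[OF x, of n] x by auto
    ultimately have "y < s (lower_grid n x)" for n by (rule less_le_trans)
    then show "eventually (\<lambda>n. y < s (lower_grid n x)) sequentially" by simp
  next
    fix y assume y: "s x < y"
    obtain b where b: "b \<in> {0<..<x}" "s b < y" using support_profile_left_cont_less[OF s x' y] .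
    obtain N where N: "1 / real (Suc N) < x - b" using nat_approx_posE[of "x - b"] b by auto
    have "s (lower_grid n x) < y" if "N \<le> n" for n
    proof -
      have "1 / real (Suc n) \<le> 1 / real (Suc N)" using that by (simp add: frac_le)
      then have "b \<le> lower_grid n x" using lower_grid_bounds(3)[OF x, of n] N by linarith
      then have "s (lower_grid n x) \<le> s b"
        using support_profile_antimono[OF s] b lower_grid_bounds(2)[OF x, of n] x by auto
      then show ?thesis using b by simp
    qed
    then show "eventually (\<lambda>n. s (lower_grid n x) < y) sequentially"
      by (auto simp: eventually_sequentially)
  qed
qed

lemma borel_measurable_support_profile:
  assumes s: "support_profile s"
  shows "(\<lambda>a. s (clamp01 a)) \<in> borel_measurable borel"
proof -
  have "mono (\<lambda>a. - s (clamp01 a))"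
  proof (rule monoI)
    fix a b :: real assume "a \<le> b"
    then have "s (clamp01 b) \<le> s (clamp01 a)"
      using support_profile_antimono[OF s] clamp01_range[of a] clamp01_range[of b] clamp01_mono[of a b] by auto
    then show "- s (clamp01 a) \<le> - s (clamp01 b)" by simp
  qed
  then show ?thesis using borel_measurable_mono[of "\<lambda>a. - s (clamp01 a)"] by simp
qed

section \<open>Medians of real random variables\<close>

lemma (in finite_measure) measure_INT_antimono_ge:
  fixes A :: "real \<Rightarrow> 'a set"
  assumes ab: "a < b" and sets: "\<And>t. t \<in> {a<..<b} \<Longrightarrow> A t \<in> sets M"
    and anti: "\<And>s t. a < s \<Longrightarrow> s \<le> t \<Longrightarrow> t < b \<Longrightarrow> A t \<subseteq> A s"
    and ge: "\<And>t. t \<in> {a<..<b} \<Longrightarrow> c \<le> measure M (A t)"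
  shows "c \<le> measure M (\<Inter>t\<in>{a<..<b}. A t)"
proof -
  define s where "s n = b - (b - a) / real (n + 2)" for n :: nat
  have s: "s n \<in> {a<..<b}" for n
  proof -
    have "(b - a) * 1 < (b - a) * real (n + 2)" using ab by (intro mult_strict_left_mono) auto
    then have "(b - a) / real (n + 2) < b - a" by (simp add: divide_less_eq)
    moreover have "0 < (b - a) / real (n + 2)" using ab by simp
    ultimately show ?thesis by (simp add: s_def)
  qed
  have s_mono: "s i \<le> s j" if "i \<le> j" for i j
    using ab that by (auto simp: s_def intro!: divide_left_mono)
  have cofinal: "\<exists>n. t \<le> s n" if "t < b" for t
  proof -
    obtain n where "(b - a) / (b - t) < real n" using reals_Archimedean2 by blast
    then have "(b - a) / real (n + 2) \<le> b - t"
      using ab that by (simp add: field_simps)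
    then show ?thesis unfolding s_def by (intro exI[of _ n]) linarith
  qed
  have "(\<Inter>n. A (s n)) = (\<Inter>t\<in>{a<..<b}. A t)"
  proof (intro equalityI subsetI)
    fix x assume x: "x \<in> (\<Inter>n. A (s n))"
    show "x \<in> (\<Inter>t\<in>{a<..<b}. A t)"
    proof
      fix t assume t: "t \<in> {a<..<b}"
      then obtain n where "t \<le> s n" using cofinal by auto
      then show "x \<in> A t" using x anti[of t "s n"] s[of n] t by auto
    qed
  qed (use s in blast)
  moreover have "(\<lambda>n. measure M (A (s n))) \<longlonglongrightarrow> measure M (\<Inter>n. A (s n))"
    using sets s anti s_mono by (intro finite_Lim_measure_decseq) (auto simp: decseq_def)
  ultimately show ?thesis
    using ge s by (auto intro: LIMSEQ_le_const)
qed

lemma (in finite_measure) measure_INT_mono_ge: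
  fixes A :: "real \<Rightarrow> 'a set"
  assumes "a < b" and "\<And>t. t \<in> {a<..<b} \<Longrightarrow> A t \<in> sets M"
    and "\<And>s t. a < s \<Longrightarrow> s \<le> t \<Longrightarrow> t < b \<Longrightarrow> A s \<subseteq> A t"
    and "\<And>t. t \<in> {a<..<b} \<Longrightarrow> c \<le> measure M (A t)"
  shows "c \<le> measure M (\<Inter>t\<in>{a<..<b}. A t)"
proof -
  have "c \<le> measure M (\<Inter>t\<in>{-b<..<-a}. A (- t))"
    using assms by (intro measure_INT_antimono_ge) auto
  also have "(\<Inter>t\<in>{-b<..<-a}. A (- t)) = (\<Inter>t\<in>{a<..<b}. A t)"
    by (simp add: image_image flip: image_uminus_greaterThanLessThan)
  finally show ?thesis .
qed

lemma ex_in_interval_if_AE: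
  assumes ae: "AE a in lborel. a \<in> {0..1} \<longrightarrow> P a" and a: "0 \<le> a0" "a0 < a1" "a1 \<le> (1::real)"
  shows "\<exists>a\<in>{a0<..<a1}. P a"
proof (rule ccontr)
  assume none: "\<not> (\<exists>a\<in>{a0<..<a1}. P a)"
  from ae obtain N where N: "{x \<in> space lborel. \<not> (x \<in> {0..1} \<longrightarrow> P x)} \<subseteq> N"
      "emeasure lborel N = 0" "N \<in> sets lborel"
    by (rule AE_E)
  have "{a0<..<a1} \<subseteq> N" using N(1) none a by auto
  then have "emeasure lborel {a0<..<a1} \<le> emeasure lborel N" using N(3) by (intro emeasure_mono)
  then show False using N(2) a by simp
qed

context prob_space
begin

definition median :: "('a \<Rightarrow> real) \<Rightarrow> real \<Rightarrow> bool" where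
  "median Z m \<longleftrightarrow> 1/2 \<le> prob {\<omega>\<in>space M. Z \<omega> \<le> m} \<and> 1/2 \<le> prob {\<omega>\<in>space M. m \<le> Z \<omega>}"

definition halfspace_depth :: "('a \<Rightarrow> real) \<Rightarrow> real \<Rightarrow> real" where
  "halfspace_depth Z c = min (prob {\<omega>\<in>space M. Z \<omega> \<le> c}) (prob {\<omega>\<in>space M. c \<le> Z \<omega>})"

lemma median_iff_halfspace_depth: "median Z m \<longleftrightarrow> 1/2 \<le> halfspace_depth Z m"
  by (simp add: median_def halfspace_depth_def)

lemma median_uminus: "median (\<lambda>\<omega>. - Z \<omega>) (- m) \<longleftrightarrow> median Z m"
  unfolding median_def by (auto simp: conj_commute)

lemma prob_ge_of_less:
  fixes Z :: "'a \<Rightarrow> real"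
  assumes Z: "Z \<in> borel_measurable M" and H: "\<And>t. t < m \<Longrightarrow> c \<le> prob {\<omega>\<in>space M. t \<le> Z \<omega>}"
  shows "c \<le> prob {\<omega>\<in>space M. m \<le> Z \<omega>}"
proof -
  have "c \<le> prob (\<Inter>t\<in>{m - 1<..<m}. {\<omega>\<in>space M. t \<le> Z \<omega>})"
    using Z H by (intro measure_INT_antimono_ge) auto
  also have "(\<Inter>t\<in>{m - 1<..<m}. {\<omega>\<in>space M. t \<le> Z \<omega>}) = {\<omega>\<in>space M. m \<le> Z \<omega>}"
  proof (intro equalityI subsetI)
    fix \<omega> assume \<omega>: "\<omega> \<in> (\<Inter>t\<in>{m - 1<..<m}. {\<omega>\<in>space M. t \<le> Z \<omega>})"
    moreover have "m - 1/2 \<in> {m - 1<..<m}" by simp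
    ultimately have "\<omega> \<in> space M" by blast
    moreover have "m \<le> Z \<omega>" by (rule dense_le_bounded[of "m - 1"]) (use \<omega> in auto)
    ultimately show "\<omega> \<in> {\<omega>\<in>space M. m \<le> Z \<omega>}" by simp
  qed auto
  finally show ?thesis .
qed

lemma prob_le_of_greater:
  fixes Z :: "'a \<Rightarrow> real"
  assumes Z: "Z \<in> borel_measurable M" and H: "\<And>t. m < t \<Longrightarrow> c \<le> prob {\<omega>\<in>space M. Z \<omega> \<le> t}"
  shows "c \<le> prob {\<omega>\<in>space M. Z \<omega> \<le> m}"
proof -
  have "c \<le> prob (\<Inter>t\<in>{m<..<m + 1}. {\<omega>\<in>space M. Z \<omega> \<le> t})"
    using Z H by (intro measure_INT_mono_ge) auto
  also have "(\<Inter>t\<in>{m<..<m + 1}. {\<omega>\<in>space M. Z \<omega> \<le> t}) = {\<omega>\<in>space M. Z \<omega> \<le> m}"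
  proof (intro equalityI subsetI)
    fix \<omega> assume \<omega>: "\<omega> \<in> (\<Inter>t\<in>{m<..<m + 1}. {\<omega>\<in>space M. Z \<omega> \<le> t})"
    moreover have "m + 1/2 \<in> {m<..<m + 1}" by simp
    ultimately have "\<omega> \<in> space M" by blast
    moreover have "Z \<omega> \<le> m" by (rule dense_ge_bounded[of m "m + 1"]) (use \<omega> in auto)
    ultimately show "\<omega> \<in> {\<omega>\<in>space M. Z \<omega> \<le> m}" by simp
  qed auto
  finally show ?thesis .
qed

lemma prob_add_le_1: "A \<in> events \<Longrightarrow> B \<in> events \<Longrightarrow> A \<inter> B = {} \<Longrightarrow> prob A + prob B \<le> 1"
  using finite_measure_Union[of A B] prob_le_1[of "A \<union> B"] by simp

lemma one_le_prob_add:
  assumes "A \<in> events" "B \<in> events" "space M \<subseteq> A \<union> B"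
  shows "1 \<le> prob A + prob B"
proof -
  have "A \<union> B = space M" using assms sets.sets_into_space by blast
  then show ?thesis using measure_subadditive[OF assms(1,2)] prob_space by simp
qed

lemma prob_Collect_mono:
  assumes "{\<omega>\<in>space M. Q \<omega>} \<in> events" "\<And>\<omega>. \<omega> \<in> space M \<Longrightarrow> P \<omega> \<Longrightarrow> Q \<omega>"
  shows "prob {\<omega>\<in>space M. P \<omega>} \<le> prob {\<omega>\<in>space M. Q \<omega>}"
  using assms by (intro finite_measure_mono) auto

lemma halfspace_depth_le_median:
  fixes Z :: "'a \<Rightarrow> real"
  assumes Z: "Z \<in> borel_measurable M" and m: "median Z m"
  shows "halfspace_depth Z t \<le> halfspace_depth Z m"
proof -
  have "halfspace_depth Z t \<le> 1/2" if "t \<noteq> m"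
  proof (cases "t < m")
    case True
    then have "prob {\<omega>\<in>space M. Z \<omega> \<le> t} + prob {\<omega>\<in>space M. m \<le> Z \<omega>} \<le> 1"
      using Z by (intro prob_add_le_1) auto
    then show ?thesis using m by (auto simp: median_def halfspace_depth_def)
  next
    case False
    then have "prob {\<omega>\<in>space M. Z \<omega> \<le> m} + prob {\<omega>\<in>space M. t \<le> Z \<omega>} \<le> 1"
      using Z that by (intro prob_add_le_1) auto
    then show ?thesis using m by (auto simp: median_def halfspace_depth_def)
  qed
  then show ?thesis using m by (cases "t = m") (auto simp: median_iff_halfspace_depth)
qed

lemma abs_dev_diff_ge:
  fixes Z :: "'a \<Rightarrow> real"
  assumes Z: "integrable M Z" and mt: "m < t"
  shows "(t - m) * (2 * prob {\<omega>\<in>space M. Z \<omega> \<le> m} - 1)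
          \<le> expectation (\<lambda>\<omega>. \<bar>Z \<omega> - t\<bar>) - expectation (\<lambda>\<omega>. \<bar>Z \<omega> - m\<bar>)"
proof -
  define S where "S = {\<omega>\<in>space M. Z \<omega> \<le> m}"
  have S: "S \<in> events" using Z by (auto simp: S_def)
  have iS: "integrable M (indicator S :: 'a \<Rightarrow> real)"
    using S by (intro integrable_real_indicator) (auto simp: emeasure_eq_measure)
  have "(t - m) * (2 * prob S - 1) = expectation (\<lambda>\<omega>. (t - m) * (2 * indicator S \<omega> - 1))"
    using iS S by (simp add: prob_space)
  also have "\<dots> \<le> expectation (\<lambda>\<omega>. \<bar>Z \<omega> - t\<bar> - \<bar>Z \<omega> - m\<bar>)"
  proof (rule integral_mono)
    fix \<omega> assume "\<omega> \<in> space M"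
    then show "(t - m) * (2 * indicator S \<omega> - 1) \<le> \<bar>Z \<omega> - t\<bar> - \<bar>Z \<omega> - m\<bar>"
      using mt by (cases "Z \<omega> \<le> m") (auto simp: S_def indicator_def abs_if)
  qed (use Z iS in auto)
  also have "\<dots> = expectation (\<lambda>\<omega>. \<bar>Z \<omega> - t\<bar>) - expectation (\<lambda>\<omega>. \<bar>Z \<omega> - m\<bar>)"
    using Z by (intro Bochner_Integration.integral_diff) auto
  finally show ?thesis by (simp only: S_def)
qed

lemma median_abs_dev_le:
  fixes Z :: "'a \<Rightarrow> real"
  assumes Z: "integrable M Z" and m: "median Z m"
  shows "expectation (\<lambda>\<omega>. \<bar>Z \<omega> - m\<bar>) \<le> expectation (\<lambda>\<omega>. \<bar>Z \<omega> - t\<bar>)"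
proof -
  have less_case: "expectation (\<lambda>\<omega>. \<bar>Z \<omega> - m\<bar>) \<le> expectation (\<lambda>\<omega>. \<bar>Z \<omega> - t\<bar>)"
    if Z: "integrable M Z" and m: "median Z m" and mt: "m < t" for Z :: "'a \<Rightarrow> real" and m t
  proof -
    have "0 \<le> (t - m) * (2 * prob {\<omega>\<in>space M. Z \<omega> \<le> m} - 1)"
      using m mt by (auto simp: median_def intro!: mult_nonneg_nonneg)
    then show ?thesis using abs_dev_diff_ge[OF Z mt] by linarith
  qed
  consider (less) "m < t" | (equal) "m = t" | (greater) "t < m" by linarith
  then show ?thesis
  proof cases
    case less
    then show ?thesis by (rule less_case[OF Z m])
  next
    case greater
    have "expectation (\<lambda>\<omega>. \<bar>- Z \<omega> - - m\<bar>) \<le> expectation (\<lambda>\<omega>. \<bar>- Z \<omega> - - t\<bar>)"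
      by (rule less_case) (use Z m greater in \<open>auto simp: median_uminus\<close>)
    then show ?thesis by (simp add: abs_minus_commute)
  qed simp
qed

lemma median_if_abs_dev_le:
  fixes Z :: "'a \<Rightarrow> real"
  assumes Z: "integrable M Z" and m: "median Z m"
    and le: "expectation (\<lambda>\<omega>. \<bar>Z \<omega> - t\<bar>) \<le> expectation (\<lambda>\<omega>. \<bar>Z \<omega> - m\<bar>)"
  shows "median Z t"
proof -
  txt \<open>If \<open>P(Z \<ge> r) < 1/2\<close> for some \<open>r < t\<close>, then \<open>E|Z - \<cdot>|\<close> strictly decreases from \<open>t\<close> down to \<open>max r m\<close>,
    contradicting the minimality at the median \<open>m\<close>.\<close>
  have greater_case: "median Z t"
    if Z: "integrable M Z" and m: "median Z m" and mt: "m < t"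
      and le: "expectation (\<lambda>\<omega>. \<bar>Z \<omega> - t\<bar>) \<le> expectation (\<lambda>\<omega>. \<bar>Z \<omega> - m\<bar>)"
    for Z :: "'a \<Rightarrow> real" and m t
  proof -
    have Zm: "Z \<in> borel_measurable M" using Z by auto
    have "prob {\<omega>\<in>space M. Z \<omega> \<le> m} \<le> prob {\<omega>\<in>space M. Z \<omega> \<le> t}"
      using mt Zm by (intro finite_measure_mono) auto
    moreover have "1/2 \<le> prob {\<omega>\<in>space M. t \<le> Z \<omega>}"
    proof (rule prob_ge_of_less[OF Zm])
      fix r assume "r < t"
      define r' where "r' = max r m"
      have r't: "r' < t" using \<open>r < t\<close> mt by (simp add: r'_def)
      have "prob {\<omega>\<in>space M. r' \<le> Z \<omega>} \<le> prob {\<omega>\<in>space M. r \<le> Z \<omega>}"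
        using Zm by (intro finite_measure_mono) (auto simp: r'_def)
      moreover have "\<not> 1/2 < prob {\<omega>\<in>space M. Z \<omega> \<le> r'}"
      proof
        assume "1/2 < prob {\<omega>\<in>space M. Z \<omega> \<le> r'}"
        then have "0 < (t - r') * (2 * prob {\<omega>\<in>space M. Z \<omega> \<le> r'} - 1)"
          using r't by (intro mult_pos_pos) auto
        then have "expectation (\<lambda>\<omega>. \<bar>Z \<omega> - r'\<bar>) < expectation (\<lambda>\<omega>. \<bar>Z \<omega> - t\<bar>)"
          using abs_dev_diff_ge[OF Z r't] by linarith
        then show False using median_abs_dev_le[OF Z m, of r'] le by linarith
      qed
      moreover have "1 \<le> prob {\<omega>\<in>space M. Z \<omega> \<le> r'} + prob {\<omega>\<in>space M. r' \<le> Z \<omega>}"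
        using Zm by (intro one_le_prob_add) auto
      ultimately show "1/2 \<le> prob {\<omega>\<in>space M. r \<le> Z \<omega>}" by linarith
    qed
    ultimately show ?thesis using m by (simp add: median_def)
  qed
  consider (less) "m < t" | (equal) "m = t" | (greater) "t < m" by linarith
  then show ?thesis
  proof cases
    case less
    then show ?thesis by (rule greater_case[OF Z m _ le])
  next
    case greater
    have "median (\<lambda>\<omega>. - Z \<omega>) (- t)"
      by (rule greater_case[of _ "- m"]) (use Z m le greater in \<open>auto simp: median_uminus abs_minus_commute\<close>)
    then show ?thesis by (simp add: median_uminus)
  qed (use m in simp)
qed

definition upper_median :: "('a \<Rightarrow> real) \<Rightarrow> real" where
  "upper_median Z = Sup {t. 1/2 \<le> prob {\<omega>\<in>space M. t \<le> Z \<omega>}}"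

lemma cdf_distr_eq:
  fixes Z :: "'a \<Rightarrow> real"
  assumes Z: "Z \<in> borel_measurable M"
  shows "cdf (distr M borel Z) x = prob {\<omega>\<in>space M. Z \<omega> \<le> x}"
proof -
  have "cdf (distr M borel Z) x = prob (Z -` {..x} \<inter> space M)" using Z by (simp add: cdf_def measure_distr)
  also have "Z -` {..x} \<inter> space M = {\<omega>\<in>space M. Z \<omega> \<le> x}" by auto
  finally show ?thesis .
qed

lemma upper_median_set:
  fixes Z :: "'a \<Rightarrow> real"
  assumes Z: "Z \<in> borel_measurable M"
  shows "{t. 1/2 \<le> prob {\<omega>\<in>space M. t \<le> Z \<omega>}} \<noteq> {}"
    and "bdd_above {t. 1/2 \<le> prob {\<omega>\<in>space M. t \<le> Z \<omega>}}"
proof -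
  interpret D: real_distribution "distr M borel Z" by (rule real_distribution_distr[OF Z])
  have "eventually (\<lambda>t. cdf (distr M borel Z) t < 1/2) at_bot"
    by (rule order_tendstoD(2)[OF D.cdf_lim_at_bot]) simp
  then obtain t0 where "cdf (distr M borel Z) t0 < 1/2"
    by (metis eventually_at_bot_linorder order_refl)
  then have "prob {\<omega>\<in>space M. Z \<omega> \<le> t0} < 1/2" by (simp add: cdf_distr_eq[OF Z])
  moreover have "1 \<le> prob {\<omega>\<in>space M. Z \<omega> \<le> t0} + prob {\<omega>\<in>space M. t0 \<le> Z \<omega>}"
    using Z by (intro one_le_prob_add) auto
  ultimately have "1/2 \<le> prob {\<omega>\<in>space M. t0 \<le> Z \<omega>}" by linarith
  then show "{t. 1/2 \<le> prob {\<omega>\<in>space M. t \<le> Z \<omega>}} \<noteq> {}" by blast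
  have "eventually (\<lambda>t. 1/2 < cdf (distr M borel Z) t) at_top"
    by (rule order_tendstoD(1)[OF D.cdf_lim_at_top_prob]) simp
  then obtain t1 where "1/2 < cdf (distr M borel Z) t1"
    by (metis eventually_at_top_linorder order_refl)
  then have t1: "1/2 < prob {\<omega>\<in>space M. Z \<omega> \<le> t1}" by (simp add: cdf_distr_eq[OF Z])
  show "bdd_above {t. 1/2 \<le> prob {\<omega>\<in>space M. t \<le> Z \<omega>}}"
  proof (rule bdd_aboveI)
    fix t assume t: "t \<in> {t. 1/2 \<le> prob {\<omega>\<in>space M. t \<le> Z \<omega>}}"
    show "t \<le> t1"
    proof (rule ccontr)
      assume "\<not> t \<le> t1"
      then have "prob {\<omega>\<in>space M. Z \<omega> \<le> t1} + prob {\<omega>\<in>space M. t \<le> Z \<omega>} \<le> 1"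
        using Z by (intro prob_add_le_1) auto
      then show False using t t1 by simp
    qed
  qed
qed

lemma le_upper_median:
  fixes Z :: "'a \<Rightarrow> real"
  assumes "Z \<in> borel_measurable M" "1/2 \<le> prob {\<omega>\<in>space M. t \<le> Z \<omega>}"
  shows "t \<le> upper_median Z"
  unfolding upper_median_def using assms by (intro cSup_upper upper_median_set(2)) auto

lemma prob_ge_below_upper_median:
  fixes Z :: "'a \<Rightarrow> real"
  assumes Z: "Z \<in> borel_measurable M" and t: "t < upper_median Z"
  shows "1/2 \<le> prob {\<omega>\<in>space M. t \<le> Z \<omega>}"
proof -
  obtain t' where t': "1/2 \<le> prob {\<omega>\<in>space M. t' \<le> Z \<omega>}" "t < t'"
    using less_cSupD[OF upper_median_set(1)[OF Z]] t unfolding upper_median_def by blast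
  have "prob {\<omega>\<in>space M. t' \<le> Z \<omega>} \<le> prob {\<omega>\<in>space M. t \<le> Z \<omega>}"
    using Z t' by (intro finite_measure_mono) auto
  then show ?thesis using t' by simp
qed

lemma median_upper_median:
  fixes Z :: "'a \<Rightarrow> real"
  assumes Z: "Z \<in> borel_measurable M"
  shows "median Z (upper_median Z)"
proof -
  have "1/2 \<le> prob {\<omega>\<in>space M. Z \<omega> \<le> upper_median Z}"
  proof (rule prob_le_of_greater[OF Z])
    fix t assume "upper_median Z < t"
    then have "\<not> 1/2 \<le> prob {\<omega>\<in>space M. t \<le> Z \<omega>}" by (metis le_upper_median[OF Z] leD)
    moreover have "1 \<le> prob {\<omega>\<in>space M. Z \<omega> \<le> t} + prob {\<omega>\<in>space M. t \<le> Z \<omega>}"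
      using Z by (intro one_le_prob_add) auto
    ultimately show "1/2 \<le> prob {\<omega>\<in>space M. Z \<omega> \<le> t}" by linarith
  qed
  moreover have "1/2 \<le> prob {\<omega>\<in>space M. upper_median Z \<le> Z \<omega>}"
    using prob_ge_below_upper_median[OF Z] by (rule prob_ge_of_less[OF Z])
  ultimately show ?thesis by (simp add: median_def)
qed

lemma upper_median_mono:
  fixes Z1 Z2 :: "'a \<Rightarrow> real"
  assumes Z1: "Z1 \<in> borel_measurable M" and Z2: "Z2 \<in> borel_measurable M"
    and le: "\<And>\<omega>. \<omega> \<in> space M \<Longrightarrow> Z1 \<omega> \<le> Z2 \<omega>"
  shows "upper_median Z1 \<le> upper_median Z2"
proof (rule le_upper_median[OF Z2])
  have "prob {\<omega>\<in>space M. upper_median Z1 \<le> Z1 \<omega>} \<le> prob {\<omega>\<in>space M. upper_median Z1 \<le> Z2 \<omega>}"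
    using Z1 Z2 le by (intro finite_measure_mono) (auto intro: order_trans)
  then show "1/2 \<le> prob {\<omega>\<in>space M. upper_median Z1 \<le> Z2 \<omega>}"
    using median_upper_median[OF Z1] by (simp add: median_def)
qed

lemma upper_median_add_nonneg:
  fixes Z1 Z2 :: "'a \<Rightarrow> real"
  assumes Z1: "Z1 \<in> borel_measurable M" and Z2: "Z2 \<in> borel_measurable M"
    and nonneg: "\<And>\<omega>. \<omega> \<in> space M \<Longrightarrow> 0 \<le> Z1 \<omega> + Z2 \<omega>"
  shows "0 \<le> upper_median Z1 + upper_median Z2"
proof (rule ccontr)
  define t where "t = (upper_median Z1 - upper_median Z2) / 2"
  assume "\<not> 0 \<le> upper_median Z1 + upper_median Z2"
  then have t1: "upper_median Z1 < t" and t2: "upper_median Z2 < - t"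
    unfolding t_def by (simp_all add: field_simps)
  have "space M \<subseteq> {\<omega>\<in>space M. t \<le> Z1 \<omega>} \<union> {\<omega>\<in>space M. - t \<le> Z2 \<omega>}"
  proof
    fix \<omega> assume "\<omega> \<in> space M"
    moreover have "t \<le> Z1 \<omega> \<or> - t \<le> Z2 \<omega>" using nonneg[OF \<open>\<omega> \<in> space M\<close>] by linarith
    ultimately show "\<omega> \<in> {\<omega>\<in>space M. t \<le> Z1 \<omega>} \<union> {\<omega>\<in>space M. - t \<le> Z2 \<omega>}" by blast
  qed
  then have "1 \<le> prob {\<omega>\<in>space M. t \<le> Z1 \<omega>} + prob {\<omega>\<in>space M. - t \<le> Z2 \<omega>}"
    using Z1 Z2 by (intro one_le_prob_add) auto
  moreover have "\<not> 1/2 \<le> prob {\<omega>\<in>space M. t \<le> Z1 \<omega>}" "\<not> 1/2 \<le> prob {\<omega>\<in>space M. - t \<le> Z2 \<omega>}"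
    using le_upper_median[OF Z1, of t] le_upper_median[OF Z2, of "- t"] t1 t2 by auto
  ultimately show False by linarith
qed

end

section \<open>Random support profiles\<close>

locale random_profile = prob_space +
  fixes Z :: "real \<Rightarrow> 'a \<Rightarrow> real"
  assumes measurable_Z: "\<And>a. a \<in> {0..1} \<Longrightarrow> Z a \<in> borel_measurable M"
    and support_profile_Z: "\<And>\<omega>. \<omega> \<in> space M \<Longrightarrow> support_profile (\<lambda>a. Z a \<omega>)"
begin

lemma Z_antimono: "\<omega> \<in> space M \<Longrightarrow> 0 \<le> a \<Longrightarrow> a \<le> b \<Longrightarrow> b \<le> 1 \<Longrightarrow> Z b \<omega> \<le> Z a \<omega>"
  using support_profile_antimono[OF support_profile_Z] .

lemma prob_ge_left_cont:
  assumes g: "g \<in> {0<..1}" and ge: "\<And>b. b \<in> {0<..<g} \<Longrightarrow> p \<le> prob {\<omega>\<in>space M. c \<le> Z b \<omega>}"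
  shows "p \<le> prob {\<omega>\<in>space M. c \<le> Z g \<omega>}"
proof -
  have "p \<le> prob (\<Inter>b\<in>{0<..<g}. {\<omega>\<in>space M. c \<le> Z b \<omega>})"
  proof (rule measure_INT_antimono_ge)
    show "{\<omega>\<in>space M. c \<le> Z b \<omega>} \<in> events" if "b \<in> {0<..<g}" for b
      using measurable_Z[of b] that g by auto
    show "{\<omega>\<in>space M. c \<le> Z t \<omega>} \<subseteq> {\<omega>\<in>space M. c \<le> Z s \<omega>}" if "0 < s" "s \<le> t" "t < g" for s t
      using Z_antimono[of _ s t] that g by (auto intro: order_trans)
  qed (use g ge in auto)
  also have "(\<Inter>b\<in>{0<..<g}. {\<omega>\<in>space M. c \<le> Z b \<omega>}) = {\<omega>\<in>space M. c \<le> Z g \<omega>}"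
  proof (intro equalityI subsetI)
    fix \<omega> assume \<omega>: "\<omega> \<in> (\<Inter>b\<in>{0<..<g}. {\<omega>\<in>space M. c \<le> Z b \<omega>})"
    moreover have "g / 2 \<in> {0<..<g}" using g by simp
    ultimately have "\<omega> \<in> space M" by blast
    moreover have "c \<le> Z g \<omega>"
      by (rule support_profile_left_cont[OF support_profile_Z[OF \<open>\<omega> \<in> space M\<close>] g]) (use \<omega> in blast)
    ultimately show "\<omega> \<in> {\<omega>\<in>space M. c \<le> Z g \<omega>}" by simp
  next
    fix \<omega> assume "\<omega> \<in> {\<omega>\<in>space M. c \<le> Z g \<omega>}"
    then show "\<omega> \<in> (\<Inter>b\<in>{0<..<g}. {\<omega>\<in>space M. c \<le> Z b \<omega>})"
      using Z_antimono[of \<omega> _ g] g by (auto intro: order_trans)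
  qed
  finally show ?thesis .
qed

lemma prob_le_at_0:
  assumes le: "\<And>b. b \<in> {0<..1} \<Longrightarrow> p \<le> prob {\<omega>\<in>space M. Z b \<omega> \<le> c}"
  shows "p \<le> prob {\<omega>\<in>space M. Z 0 \<omega> \<le> c}"
proof -
  have "p \<le> prob (\<Inter>b\<in>{0<..<1}. {\<omega>\<in>space M. Z b \<omega> \<le> c})"
  proof (rule measure_INT_mono_ge)
    show "{\<omega>\<in>space M. Z b \<omega> \<le> c} \<in> events" if "b \<in> {0<..<1}" for b
      using measurable_Z[of b] that by auto
    show "{\<omega>\<in>space M. Z s \<omega> \<le> c} \<subseteq> {\<omega>\<in>space M. Z t \<omega> \<le> c}" if "0 < s" "s \<le> t" "t < 1" for s t
      using Z_antimono[of _ s t] that by (auto intro: order_trans)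
  qed (use le in auto)
  also have "(\<Inter>b\<in>{0<..<1}. {\<omega>\<in>space M. Z b \<omega> \<le> c}) = {\<omega>\<in>space M. Z 0 \<omega> \<le> c}"
  proof (intro equalityI subsetI)
    fix \<omega> assume \<omega>: "\<omega> \<in> (\<Inter>b\<in>{0<..<1}. {\<omega>\<in>space M. Z b \<omega> \<le> c})"
    moreover have "1/2 \<in> {0<..<1::real}" by simp
    ultimately have sp: "\<omega> \<in> space M" by blast
    have "Z 0 \<omega> \<le> c"
    proof (rule support_profile_at_0[OF support_profile_Z[OF sp]])
      fix b :: real assume b: "b \<in> {0<..1}"
      then have "Z b \<omega> \<le> Z (b / 2) \<omega>" using Z_antimono[OF sp, of "b / 2" b] by auto
      moreover have "Z (b / 2) \<omega> \<le> c" using \<omega> b by auto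
      ultimately show "Z b \<omega> \<le> c" by linarith
    qed
    then show "\<omega> \<in> {\<omega>\<in>space M. Z 0 \<omega> \<le> c}" using sp by simp
  next
    fix \<omega> assume \<omega>: "\<omega> \<in> {\<omega>\<in>space M. Z 0 \<omega> \<le> c}"
    show "\<omega> \<in> (\<Inter>b\<in>{0<..<1}. {\<omega>\<in>space M. Z b \<omega> \<le> c})"
    proof
      fix b :: real assume "b \<in> {0<..<1}"
      then have "Z b \<omega> \<le> Z 0 \<omega>" using \<omega> Z_antimono[of \<omega> 0 b] by auto
      then show "\<omega> \<in> {\<omega>\<in>space M. Z b \<omega> \<le> c}" using \<omega> by auto
    qed
  qed
  finally show ?thesis .
qed

lemma upper_median_antimono:
  "0 \<le> a \<Longrightarrow> a \<le> b \<Longrightarrow> b \<le> 1 \<Longrightarrow> upper_median (Z b) \<le> upper_median (Z a)"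
  using measurable_Z Z_antimono by (intro upper_median_mono) auto

lemma bdd_above_upper_median: "bdd_above ((\<lambda>b. upper_median (Z b)) ` {0<..1})"
  using upper_median_antimono[of 0] by (intro bdd_aboveI2[where M="upper_median (Z 0)"]) auto

text \<open>At 0 the upper median need not be right-continuous, so it is replaced by its right limit.\<close>

definition median_profile :: "real \<Rightarrow> real" where
  "median_profile a = (if a = 0 then (SUP b\<in>{0<..1}. upper_median (Z b)) else upper_median (Z a))"

lemma support_profile_median_profile: "support_profile median_profile"
  unfolding support_profile_def
proof (intro conjI allI impI ballI)
  fix a b :: real assume ab: "0 \<le> a" "a \<le> b" "b \<le> 1"
  show "median_profile b \<le> median_profile a"
  proof (cases "a = 0")
    case True
    then show ?thesis
      using ab cSUP_upper[OF _ bdd_above_upper_median, of b] by (auto simp: median_profile_def)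
  qed (use ab upper_median_antimono in \<open>auto simp: median_profile_def\<close>)
next
  fix g x assume g: "g \<in> {0<..1}" and x: "\<forall>b\<in>{0<..<g}. x \<le> median_profile b"
  have "x \<le> upper_median (Z g)"
  proof (rule dense_le)
    fix t assume "t < x"
    have "1/2 \<le> prob {\<omega>\<in>space M. t \<le> Z g \<omega>}"
    proof (rule prob_ge_left_cont[OF g])
      fix b assume b: "b \<in> {0<..<g}"
      then have "t < upper_median (Z b)" using x[rule_format, of b] \<open>t < x\<close> by (auto simp: median_profile_def)
      then show "1/2 \<le> prob {\<omega>\<in>space M. t \<le> Z b \<omega>}"
        using b g by (intro prob_ge_below_upper_median measurable_Z) auto
    qed
    then show "t \<le> upper_median (Z g)" using g by (intro le_upper_median measurable_Z) auto
  qed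
  then show "x \<le> median_profile g" using g by (simp add: median_profile_def)
next
  fix x assume "\<forall>b\<in>{0<..1}. median_profile b \<le> x"
  then show "median_profile 0 \<le> x"
    by (auto simp: median_profile_def intro!: cSUP_least)
qed

lemma median_median_profile:
  assumes a: "a \<in> {0..1}"
  shows "median (Z a) (median_profile a)"
proof (cases "a = 0")
  case False
  then show ?thesis using a median_upper_median[OF measurable_Z[OF a]] by (simp add: median_profile_def)
next
  case True
  define m0 where "m0 = (SUP b\<in>{0<..1}. upper_median (Z b))"
  have Z0: "Z 0 \<in> borel_measurable M" by (rule measurable_Z) simp
  have "1/2 \<le> prob {\<omega>\<in>space M. Z 0 \<omega> \<le> m0}"
  proof (rule prob_le_at_0)
    fix b :: real assume b: "b \<in> {0<..1}"
    have "prob {\<omega>\<in>space M. Z b \<omega> \<le> upper_median (Z b)} \<le> prob {\<omega>\<in>space M. Z b \<omega> \<le> m0}"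
      using measurable_Z[of b] b cSUP_upper[OF b bdd_above_upper_median]
      by (intro finite_measure_mono) (auto simp: m0_def)
    moreover have "1/2 \<le> prob {\<omega>\<in>space M. Z b \<omega> \<le> upper_median (Z b)}"
      using median_upper_median[OF measurable_Z, of b] b by (simp add: median_def)
    ultimately show "1/2 \<le> prob {\<omega>\<in>space M. Z b \<omega> \<le> m0}" by simp
  qed
  moreover have "1/2 \<le> prob {\<omega>\<in>space M. m0 \<le> Z 0 \<omega>}"
  proof (rule prob_ge_of_less[OF Z0])
    fix t assume "t < m0"
    then obtain b :: real where b: "b \<in> {0<..1}" "t < upper_median (Z b)"
      unfolding m0_def by (auto simp: less_cSUP_iff[OF _ bdd_above_upper_median])
    then have "1/2 \<le> prob {\<omega>\<in>space M. t \<le> Z b \<omega>}"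
      by (intro prob_ge_below_upper_median measurable_Z) auto
    moreover have "prob {\<omega>\<in>space M. t \<le> Z b \<omega>} \<le> prob {\<omega>\<in>space M. t \<le> Z 0 \<omega>}"
      using Z0 b Z_antimono[of _ 0 b] by (intro finite_measure_mono) (auto intro: order_trans)
    ultimately show "1/2 \<le> prob {\<omega>\<in>space M. t \<le> Z 0 \<omega>}" by simp
  qed
  ultimately show ?thesis using True by (simp add: median_def median_profile_def m0_def)
qed

text \<open>\<open>Z\<close> at level \<open>a\<close> is the pointwise limit of \<open>Z\<close> on the grids \<open>lower_grid n a\<close>, by left-continuity.\<close>

lemma measurable_Z_pair: "(\<lambda>p. Z (clamp01 (snd p)) (fst p)) \<in> borel_measurable (M \<Otimes>\<^sub>M lborel)"
proof (rule borel_measurable_LIMSEQ_real)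
  fix n
  let ?k = "\<lambda>p::'a \<times> real. \<lfloor>clamp01 (snd p) * real (Suc n)\<rfloor>"
  let ?f = "\<lambda>(k::int) (p::'a \<times> real). Z (clamp01 (real_of_int k / real (Suc n))) (fst p)"
  have "(\<lambda>p. ?f (?k p) p) \<in> borel_measurable (M \<Otimes>\<^sub>M lborel)"
  proof (rule measurable_compose_countable[where f="?f" and g="?k"])
    fix k :: int
    show "?f k \<in> borel_measurable (M \<Otimes>\<^sub>M lborel)"
      using measurable_Z[OF clamp01_range] by (rule measurable_compose[OF measurable_fst, rotated])
  next
    have "(\<lambda>p::'a \<times> real. clamp01 (snd p) * real (Suc n)) \<in> borel_measurable (M \<Otimes>\<^sub>M lborel)"
      unfolding clamp01_def by measurable
    then show "?k \<in> measurable (M \<Otimes>\<^sub>M lborel) (count_space UNIV)"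
      by (rule measurable_compose[OF _ measurable_real_floor])
  qed
  then show "(\<lambda>p. Z (clamp01 (lower_grid n (clamp01 (snd p)))) (fst p)) \<in> borel_measurable (M \<Otimes>\<^sub>M lborel)"
    by (simp add: lower_grid_def)
next
  fix p :: "'a \<times> real" assume "p \<in> space (M \<Otimes>\<^sub>M lborel)"
  then have "fst p \<in> space M" by (auto simp: space_pair_measure)
  have "clamp01 (lower_grid n (clamp01 (snd p))) = lower_grid n (clamp01 (snd p))" for n
    using lower_grid_bounds[OF clamp01_range[of "snd p"], of n] clamp01_range[of "snd p"] by (intro clamp01_id) auto
  then show "(\<lambda>n. Z (clamp01 (lower_grid n (clamp01 (snd p)))) (fst p)) \<longlonglongrightarrow> Z (clamp01 (snd p)) (fst p)"
    using support_profile_lower_grid_tendsto[OF support_profile_Z[OF \<open>fst p \<in> space M\<close>] clamp01_range] by simp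
qed

lemma median_if_dense_pos:
  assumes s: "support_profile s"
    and dense: "\<And>a0 a1. 0 \<le> a0 \<Longrightarrow> a0 < a1 \<Longrightarrow> a1 \<le> 1 \<Longrightarrow> \<exists>a\<in>{a0<..<a1}. median (Z a) (s a)"
    and g: "g \<in> {0<..1}"
  shows "median (Z g) (s g)"
proof -
  have "1/2 \<le> prob {\<omega>\<in>space M. s g \<le> Z g \<omega>}"
  proof (rule prob_ge_left_cont[OF g])
    fix b assume b: "b \<in> {0<..<g}"
    obtain a where a: "a \<in> {b<..<g}" "median (Z a) (s a)" using dense[of b g] b g by auto
    have "s g \<le> s a" using support_profile_antimono[OF s, of a g] a b g by auto
    have "prob {\<omega>\<in>space M. s a \<le> Z a \<omega>} \<le> prob {\<omega>\<in>space M. s g \<le> Z b \<omega>}"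
    proof (rule prob_Collect_mono)
      fix \<omega> assume "\<omega> \<in> space M" "s a \<le> Z a \<omega>"
      moreover have "Z a \<omega> \<le> Z b \<omega>" using Z_antimono[of \<omega> b a] \<open>\<omega> \<in> space M\<close> a b g by auto
      ultimately show "s g \<le> Z b \<omega>" using \<open>s g \<le> s a\<close> by linarith
    qed (use measurable_Z[of b] b g in auto)
    then show "1/2 \<le> prob {\<omega>\<in>space M. s g \<le> Z b \<omega>}" using a by (simp add: median_def)
  qed
  moreover have "1/2 \<le> prob {\<omega>\<in>space M. Z g \<omega> \<le> s g}"
  proof (rule prob_le_of_greater)
    fix t assume t: "s g < t"
    obtain b where b: "b \<in> {0<..<g}" "s b < t" using support_profile_left_cont_less[OF s g t] .
    obtain a where a: "a \<in> {b<..<g}" "median (Z a) (s a)" using dense[of b g] b g by auto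
    have "s a \<le> s b" using support_profile_antimono[OF s, of b a] a b g by auto
    have "prob {\<omega>\<in>space M. Z a \<omega> \<le> s a} \<le> prob {\<omega>\<in>space M. Z g \<omega> \<le> t}"
    proof (rule prob_Collect_mono)
      fix \<omega> assume "\<omega> \<in> space M" "Z a \<omega> \<le> s a"
      moreover have "Z g \<omega> \<le> Z a \<omega>" using Z_antimono[of \<omega> a g] \<open>\<omega> \<in> space M\<close> a b g by auto
      ultimately show "Z g \<omega> \<le> t" using \<open>s a \<le> s b\<close> \<open>s b < t\<close> by linarith
    qed (use measurable_Z[of g] g in auto)
    then show "1/2 \<le> prob {\<omega>\<in>space M. Z g \<omega> \<le> t}" using a by (simp add: median_def)
  qed (use g measurable_Z in auto)
  ultimately show ?thesis by (simp add: median_def)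
qed

lemma median_at_0_if_dense:
  assumes s: "support_profile s"
    and dense: "\<And>a0 a1. 0 \<le> a0 \<Longrightarrow> a0 < a1 \<Longrightarrow> a1 \<le> 1 \<Longrightarrow> \<exists>a\<in>{a0<..<a1}. median (Z a) (s a)"
  shows "median (Z 0) (s 0)"
proof -
  have "1/2 \<le> prob {\<omega>\<in>space M. Z 0 \<omega> \<le> s 0}"
  proof (rule prob_le_at_0)
    fix b :: real assume b: "b \<in> {0<..1}"
    obtain a where a: "a \<in> {0<..<b}" "median (Z a) (s a)" using dense[of 0 b] b by auto
    have "s a \<le> s 0" using support_profile_antimono[OF s, of 0 a] a b by auto
    have "prob {\<omega>\<in>space M. Z a \<omega> \<le> s a} \<le> prob {\<omega>\<in>space M. Z b \<omega> \<le> s 0}"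
    proof (rule prob_Collect_mono)
      fix \<omega> assume "\<omega> \<in> space M" "Z a \<omega> \<le> s a"
      moreover have "Z b \<omega> \<le> Z a \<omega>" using Z_antimono[of \<omega> a b] \<open>\<omega> \<in> space M\<close> a b by auto
      ultimately show "Z b \<omega> \<le> s 0" using \<open>s a \<le> s 0\<close> by linarith
    qed (use measurable_Z[of b] b in auto)
    then show "1/2 \<le> prob {\<omega>\<in>space M. Z b \<omega> \<le> s 0}" using a by (simp add: median_def)
  qed
  moreover have "1/2 \<le> prob {\<omega>\<in>space M. s 0 \<le> Z 0 \<omega>}"
  proof (rule prob_ge_of_less)
    fix t assume t: "t < s 0"
    obtain b where b: "b \<in> {0<..1}" "t < s b" using support_profile_at_0_less[OF s t] .
    obtain a where a: "a \<in> {0<..<b}" "median (Z a) (s a)" using dense[of 0 b] b by auto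
    have "s b \<le> s a" using support_profile_antimono[OF s, of a b] a b by auto
    have "prob {\<omega>\<in>space M. s a \<le> Z a \<omega>} \<le> prob {\<omega>\<in>space M. t \<le> Z 0 \<omega>}"
    proof (rule prob_Collect_mono)
      fix \<omega> assume "\<omega> \<in> space M" "s a \<le> Z a \<omega>"
      moreover have "Z a \<omega> \<le> Z 0 \<omega>" using Z_antimono[of \<omega> 0 a] \<open>\<omega> \<in> space M\<close> a b by auto
      ultimately show "t \<le> Z 0 \<omega>" using \<open>s b \<le> s a\<close> \<open>t < s b\<close> by linarith
    qed (use measurable_Z[of 0] in auto)
    then show "1/2 \<le> prob {\<omega>\<in>space M. t \<le> Z 0 \<omega>}" using a by (simp add: median_def)
  qed (use measurable_Z in auto)
  ultimately show ?thesis by (simp add: median_def)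
qed

lemma median_if_dense:
  assumes "support_profile s"
    and "\<And>a0 a1. 0 \<le> a0 \<Longrightarrow> a0 < a1 \<Longrightarrow> a1 \<le> 1 \<Longrightarrow> \<exists>a\<in>{a0<..<a1}. median (Z a) (s a)"
    and "a \<in> {0..1}"
  shows "median (Z a) (s a)"
proof (cases "a = 0")
  case True
  then show ?thesis using median_at_0_if_dense[OF assms(1,2)] by simp
next
  case False
  then show ?thesis using median_if_dense_pos[OF assms(1,2)] assms(3) by simp
qed

end

section \<open>Fuzzy random variables and the two medians\<close>

lemma random_compact_set_closed_hits:
  assumes K: "random_compact_set M K" and F: "closed F"
  shows "{\<omega>\<in>space M. K \<omega> \<inter> F \<noteq> {}} \<in> sets M"
proof -
  have "{\<omega>\<in>space M. K \<omega> \<inter> F \<noteq> {}} = (\<Union>n::nat. {\<omega>\<in>space M. K \<omega> \<inter> (F \<inter> cball 0 (real n)) \<noteq> {}})"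
  proof (intro equalityI subsetI)
    fix \<omega> assume "\<omega> \<in> {\<omega>\<in>space M. K \<omega> \<inter> F \<noteq> {}}"
    then obtain x where x: "\<omega> \<in> space M" "x \<in> K \<omega>" "x \<in> F" by blast
    obtain n :: nat where "norm x \<le> real n" using real_arch_simple by blast
    then have "x \<in> K \<omega> \<inter> (F \<inter> cball 0 (real n))" using x by (simp add: dist_norm)
    then show "\<omega> \<in> (\<Union>n::nat. {\<omega>\<in>space M. K \<omega> \<inter> (F \<inter> cball 0 (real n)) \<noteq> {}})" using x by blast
  qed blast
  also have "\<dots> \<in> sets M"
  proof (intro sets.countable_UN subsetI, elim rangeE)
    fix n :: nat and S assume "S = {\<omega>\<in>space M. K \<omega> \<inter> (F \<inter> cball 0 (real n)) \<noteq> {}}"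
    moreover have "compact (F \<inter> cball 0 (real n))" using F by (simp add: closed_Int_compact)
    ultimately show "S \<in> sets M" using K unfolding random_compact_set_def by blast
  qed
  finally show ?thesis .
qed

lemma Sup_scaled_ge_iff:
  fixes K :: "real set"
  assumes "compact K" "K \<noteq> {}"
  shows "c \<le> Sup ((\<lambda>v. u * v) ` K) \<longleftrightarrow> (\<exists>v\<in>K. c \<le> u * v)"
proof -
  have "compact ((\<lambda>v. u * v) ` K)" using assms(1) by (intro compact_continuous_image continuous_intros)
  then have "Sup ((\<lambda>v. u * v) ` K) \<in> (\<lambda>v. u * v) ` K" "bdd_above ((\<lambda>v. u * v) ` K)"
    using assms(2) by (auto intro!: closed_contains_Sup compact_imp_closed bounded_imp_bdd_above compact_imp_bounded)
  then show ?thesis by (auto intro: cSup_upper2)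
qed

lemma borel_measurable_Sup_scaled:
  assumes K: "random_compact_set M K"
  shows "(\<lambda>\<omega>. Sup ((\<lambda>v. u * v) ` K \<omega>)) \<in> borel_measurable M"
  unfolding borel_measurable_iff_ge
proof
  fix c :: real
  have "{\<omega>\<in>space M. c \<le> Sup ((\<lambda>v. u * v) ` K \<omega>)} = {\<omega>\<in>space M. K \<omega> \<inter> {v. c \<le> u * v} \<noteq> {}}"
    using K unfolding random_compact_set_def by (auto simp: Sup_scaled_ge_iff)
  also have "\<dots> \<in> sets M"
    by (intro random_compact_set_closed_hits[OF K] closed_Collect_le continuous_intros)
  finally show "{\<omega>\<in>space M. c \<le> Sup ((\<lambda>v. u * v) ` K \<omega>)} \<in> sets M" .
qed

lemma Sup_abs_level_0:
  assumes "fuzzy_Fc A"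
  shows "Sup (abs ` alpha_level A 0) = max (supp_fun A 1 0) (supp_fun A (-1) 0)"
proof -
  let ?l = "- supp_fun A (-1) 0" and ?h = "supp_fun A 1 0"
  have lh: "alpha_level A 0 = {?l..?h}" "?l \<le> ?h" using alpha_level_eq_supp_fun[OF assms, of 0] by auto
  have "Sup (abs ` {?l..?h}) = max ?h (- ?l)"
  proof (rule cSup_eq_maximum)
    show "max ?h (- ?l) \<in> abs ` {?l..?h}"
    proof (cases "- ?l \<le> ?h")
      case True
      then have "max ?h (- ?l) = \<bar>?h\<bar>" using lh(2) by auto
      then show ?thesis using lh(2) by auto
    next
      case False
      then have "max ?h (- ?l) = \<bar>?l\<bar>" using lh(2) by auto
      then show ?thesis using lh(2) by (auto intro!: image_eqI[of _ abs ?l])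
    qed
  qed auto
  then show ?thesis using lh(1) by simp
qed

lemma abs_supp_fun_le_Sup_abs:
  assumes A: "fuzzy_Fc A" and u: "u \<in> {-1, 1}" and a: "a \<in> {0..1}"
  shows "\<bar>supp_fun A u a\<bar> \<le> Sup (abs ` alpha_level A 0)"
proof -
  have "supp_fun A 1 a \<le> supp_fun A 1 0" "supp_fun A (-1) a \<le> supp_fun A (-1) 0"
    using support_profile_antimono[OF support_profile_supp_fun[OF A], of _ 0 a] a by auto
  then show ?thesis using supp_fun_sum_nonneg[OF A a] u Sup_abs_level_0[OF A] by auto
qed

lemma integrable_on_abs_diff_support_profiles:
  assumes "support_profile f" "support_profile g"
  shows "(\<lambda>a. \<bar>f a - g a\<bar>) integrable_on {0..1}"
proof -
  have "mono_on {0..1} (\<lambda>a. - h a)" if "support_profile h" for h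
    using support_profile_antimono[OF that] by (auto simp: mono_on_def)
  then have "integrable (lebesgue_on {0..1}) (\<lambda>a. \<bar>(- g a) - (- f a)\<bar>)"
    using assms by (intro integrable_abs Bochner_Integration.integrable_diff integrable_mono_on)
  then show ?thesis by (simp add: abs_minus_commute integrable_on_lebesgue_on)
qed

lemma Med_eq_if_maximisers:
  fixes D :: "(real \<Rightarrow> real) \<Rightarrow> 'b::order"
  assumes "\<exists>S. fuzzy_Fc S \<and> P S"
    and "\<And>A U. fuzzy_Fc A \<Longrightarrow> P A \<Longrightarrow> fuzzy_Fc U \<Longrightarrow> D U \<le> D A"
    and "\<And>A S. fuzzy_Fc A \<Longrightarrow> fuzzy_Fc S \<Longrightarrow> P S \<Longrightarrow> D S \<le> D A \<Longrightarrow> P A"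
  shows "Med D = {A. fuzzy_Fc A \<and> P A}"
  using assms unfolding Med_def by blast

lemma inverse_one_plus_le_iff: "inverse (1 + x) \<le> inverse (1 + y) \<longleftrightarrow> y \<le> (x::ennreal)"
proof -
  have inv: "inverse (1 + ennreal t) = ennreal (inverse (1 + t))" if "0 \<le> t" for t
  proof -
    have "1 + ennreal t = ennreal (1 + t)" using that by (simp add: ennreal_plus)
    moreover have "inverse (ennreal (1 + t)) = ennreal (inverse (1 + t))"
      using that by (intro inverse_ennreal) simp
    ultimately show ?thesis by (simp only:)
  qed
  show ?thesis
  proof (cases x; cases y)
    fix r s :: real assume "x = ennreal r" "0 \<le> r" "y = ennreal s" "0 \<le> s"
    then show ?thesis by (simp add: inv ennreal_le_iff)
  qed (simp_all add: top_unique)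
qed

locale integrable_fuzzy_rv = prob_space +
  fixes X :: "'a \<Rightarrow> real \<Rightarrow> real"
  assumes fuzzy_rv_X: "fuzzy_rv M X"
    and nn_integral_norm0_finite: "(\<integral>\<^sup>+ \<omega>. ennreal (norm0 X \<omega>) \<partial>M) < \<infinity>"
begin

definition sX :: "real \<Rightarrow> real \<Rightarrow> 'a \<Rightarrow> real" where
  "sX u a \<omega> = supp_fun (X \<omega>) u a"

lemma fuzzy_Fc_X: "\<omega> \<in> space M \<Longrightarrow> fuzzy_Fc (X \<omega>)"
  using fuzzy_rv_X by (simp add: fuzzy_rv_def)

lemma measurable_sX: "a \<in> {0..1} \<Longrightarrow> sX u a \<in> borel_measurable M"
  using fuzzy_rv_X borel_measurable_Sup_scaled[of M "\<lambda>\<omega>. alpha_level (X \<omega>) a" u]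
  by (simp add: fuzzy_rv_def sX_def[abs_def] supp_fun_def)

lemma random_profile_sX: "u \<in> {-1, 1} \<Longrightarrow> random_profile M (sX u)"
  using measurable_sX support_profile_supp_fun[OF fuzzy_Fc_X]
  by unfold_locales (simp_all add: sX_def[abs_def])

lemma abs_sX_le_norm0:
  "\<omega> \<in> space M \<Longrightarrow> u \<in> {-1, 1} \<Longrightarrow> a \<in> {0..1} \<Longrightarrow> \<bar>sX u a \<omega>\<bar> \<le> norm0 X \<omega>"
  using abs_supp_fun_le_Sup_abs[OF fuzzy_Fc_X] by (simp add: sX_def norm0_def)

lemma integrable_norm0: "integrable M (norm0 X)"
proof -
  have "norm0 X \<omega> = max (sX 1 0 \<omega>) (sX (-1) 0 \<omega>)" if "\<omega> \<in> space M" for \<omega>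
    using Sup_abs_level_0[OF fuzzy_Fc_X[OF that]] by (simp add: norm0_def sX_def)
  moreover have "(\<lambda>\<omega>. max (sX 1 0 \<omega>) (sX (-1) 0 \<omega>)) \<in> borel_measurable M"
    using measurable_sX[of 0] by (intro borel_measurable_max) auto
  ultimately have meas: "norm0 X \<in> borel_measurable M" by (simp cong: measurable_cong)
  have "(\<integral>\<^sup>+\<omega>. ennreal (norm (norm0 X \<omega>)) \<partial>M) = (\<integral>\<^sup>+\<omega>. ennreal (norm0 X \<omega>) \<partial>M)"
    using abs_sX_le_norm0[of _ 1 0] by (intro nn_integral_cong) force
  then show ?thesis using nn_integral_norm0_finite by (intro integrableI_bounded[OF meas]) simp
qed

lemma integrable_sX:
  assumes u: "u \<in> {-1, 1}" and a: "a \<in> {0..1}"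
  shows "integrable M (sX u a)"
proof (rule Bochner_Integration.integrable_bound[OF integrable_norm0 measurable_sX[OF a]])
  show "AE \<omega> in M. norm (sX u a \<omega>) \<le> norm (norm0 X \<omega>)"
  proof (rule AE_I2)
    fix \<omega> assume "\<omega> \<in> space M"
    then have "\<bar>sX u a \<omega>\<bar> \<le> norm0 X \<omega>" using abs_sX_le_norm0 u a by blast
    then show "norm (sX u a \<omega>) \<le> norm (norm0 X \<omega>)" by simp
  qed
qed

definition support_median :: "(real \<Rightarrow> real) \<Rightarrow> bool" where
  "support_median A \<longleftrightarrow> (\<forall>u\<in>{-1, 1}. \<forall>a\<in>{0..1}. median (sX u a) (supp_fun A u a))"

lemma ex_support_median: "\<exists>A. fuzzy_Fc A \<and> support_median A"
proof -
  interpret upper: random_profile M "sX 1" by (rule random_profile_sX) simp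
  interpret lower: random_profile M "sX (-1)" by (rule random_profile_sX) simp
  have nonneg: "0 \<le> upper.median_profile a + lower.median_profile a" if "a \<in> {0..1}" for a
  proof -
    have sum: "0 \<le> upper_median (sX 1 b) + upper_median (sX (-1) b)" if "b \<in> {0..1}" for b
      using that measurable_sX supp_fun_sum_nonneg[OF fuzzy_Fc_X] by (intro upper_median_add_nonneg) (auto simp: sX_def)
    show ?thesis
    proof (cases "a = 0")
      case True
      have "upper_median (sX 1 1) \<le> upper.median_profile 0" "upper_median (sX (-1) 1) \<le> lower.median_profile 0"
        unfolding upper.median_profile_def lower.median_profile_def
        by (auto intro!: cSUP_upper upper.bdd_above_upper_median lower.bdd_above_upper_median)
      then show ?thesis using sum[of 1] True by simp
    qed (use sum that in \<open>simp add: upper.median_profile_def lower.median_profile_def\<close>)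
  qed
  obtain A where A: "fuzzy_Fc A"
    and s: "\<And>a. a \<in> {0..1} \<Longrightarrow> supp_fun A 1 a = upper.median_profile a \<and> supp_fun A (-1) a = lower.median_profile a"
    using fuzzy_Fc_of_support_profiles[OF upper.support_profile_median_profile lower.support_profile_median_profile nonneg]
    by blast
  have "support_median A"
    unfolding support_median_def using s upper.median_median_profile lower.median_median_profile by auto
  with A show ?thesis by blast
qed

lemma D_FT_eq_INF_depth:
  "D_FT M X A = (INF p\<in>{-1, 1::real} \<times> {0..1::real}.
      halfspace_depth (sX (fst p) (snd p)) (supp_fun A (fst p) (snd p)))"
  by (simp add: D_FT_def halfspace_depth_def sX_def)

lemma bdd_below_depths:
  "bdd_below ((\<lambda>p. halfspace_depth (sX (fst p) (snd p)) (supp_fun A (fst p) (snd p))) ` P)"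
  by (rule bdd_belowI2[where m=0]) (simp add: halfspace_depth_def)

lemma half_le_D_FT_iff: "1/2 \<le> D_FT M X A \<longleftrightarrow> support_median A"
proof -
  have "1/2 \<le> D_FT M X A \<longleftrightarrow> (\<forall>p\<in>{-1, 1} \<times> {0..1}.
      1/2 \<le> halfspace_depth (sX (fst p) (snd p)) (supp_fun A (fst p) (snd p)))"
    unfolding D_FT_eq_INF_depth by (rule le_cINF_iff[OF _ bdd_below_depths]) simp
  then show ?thesis by (auto simp: support_median_def median_iff_halfspace_depth)
qed

lemma D_FT_le_support_median:
  assumes "support_median A"
  shows "D_FT M X U \<le> D_FT M X A"
  unfolding D_FT_eq_INF_depth
proof (rule cINF_mono[OF _ bdd_below_depths])
  fix p :: "real \<times> real" assume "p \<in> {-1, 1} \<times> {0..1}"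
  then show "\<exists>q\<in>{-1, 1} \<times> {0..1}. halfspace_depth (sX (fst q) (snd q)) (supp_fun U (fst q) (snd q))
      \<le> halfspace_depth (sX (fst p) (snd p)) (supp_fun A (fst p) (snd p))"
    using assms by (intro bexI[of _ p] halfspace_depth_le_median measurable_sX) (auto simp: support_median_def)
qed simp

definition abs_dev :: "(real \<Rightarrow> real) \<Rightarrow> real \<Rightarrow> real \<Rightarrow> real" where
  "abs_dev B u a = expectation (\<lambda>\<omega>. \<bar>sX u a \<omega> - supp_fun B u a\<bar>)"

lemma abs_dev_le_support_median:
  "support_median A \<Longrightarrow> u \<in> {-1, 1} \<Longrightarrow> a \<in> {0..1} \<Longrightarrow> abs_dev A u a \<le> abs_dev U u a"
  unfolding abs_dev_def support_median_def by (blast intro: median_abs_dev_le integrable_sX)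

definition mean_level_dist :: "(real \<Rightarrow> real) \<Rightarrow> real \<Rightarrow> real" where
  "mean_level_dist B a = 1/2 * abs_dev B (-1) a + 1/2 * abs_dev B 1 a"

lemma mean_level_dist_le_support_median:
  assumes "support_median A" "a \<in> {0..1}"
  shows "mean_level_dist A a \<le> mean_level_dist U a"
  using abs_dev_le_support_median[OF assms(1) _ assms(2), of "-1" U]
    abs_dev_le_support_median[OF assms(1) _ assms(2), of 1 U]
  by (simp add: mean_level_dist_def)

lemma nn_integral_rho1:
  assumes B: "fuzzy_Fc B"
  shows "(\<integral>\<^sup>+\<omega>. ennreal (rho1 B (X \<omega>)) \<partial>M)
      = (\<integral>\<^sup>+a. ennreal (indicator {0..1} a * mean_level_dist B a) \<partial>lborel)"
    and "(\<lambda>a. ennreal (indicator {0..1} a * mean_level_dist B a))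
      \<in> borel_measurable lborel"
proof -
  interpret P: pair_sigma_finite M lborel ..
  let ?d = "\<lambda>u a \<omega>. \<bar>sX u a \<omega> - supp_fun B u a\<bar>"
  define F where "F p = ennreal (indicator {0..1} (snd p) *
    (1/2 * ?d (-1) (clamp01 (snd p)) (fst p) + 1/2 * ?d 1 (clamp01 (snd p)) (fst p)))" for p
  have F_meas: "F \<in> borel_measurable (M \<Otimes>\<^sub>M lborel)"
  proof -
    have sX_pair: "(\<lambda>p. sX u (clamp01 (snd p)) (fst p)) \<in> borel_measurable (M \<Otimes>\<^sub>M lborel)"
      if "u \<in> {-1, 1}" for u
      using random_profile.measurable_Z_pair[OF random_profile_sX[OF that]] .
    have "(\<lambda>a. supp_fun B u (clamp01 a)) \<in> borel_measurable lborel" if "u \<in> {-1, 1}" for u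
      using borel_measurable_support_profile[OF support_profile_supp_fun[OF B that]] by simp
    then have B_pair: "(\<lambda>p. supp_fun B u (clamp01 (snd p))) \<in> borel_measurable (M \<Otimes>\<^sub>M lborel)"
      if "u \<in> {-1, 1}" for u
      by (rule measurable_compose[OF measurable_snd]) (use that in simp)
    note [measurable] = sX_pair[of "-1"] sX_pair[of 1] B_pair[of "-1"] B_pair[of 1]
    show ?thesis unfolding F_def by measurable
  qed
  have inner: "(\<integral>\<^sup>+\<omega>. F (\<omega>, a) \<partial>M) = ennreal (indicator {0..1} a * mean_level_dist B a)"
    for a
  proof (cases "a \<in> {0..1}")
    case True
    have int: "integrable M (?d u a)" if "u \<in> {-1, 1}" for u using integrable_sX[OF that True] by auto
    have "(\<integral>\<^sup>+\<omega>. F (\<omega>, a) \<partial>M) = (\<integral>\<^sup>+\<omega>. ennreal (1/2 * ?d (-1) a \<omega> + 1/2 * ?d 1 a \<omega>) \<partial>M)"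
      using True by (simp add: F_def clamp01_id)
    also have "\<dots> = ennreal (expectation (\<lambda>\<omega>. 1/2 * ?d (-1) a \<omega> + 1/2 * ?d 1 a \<omega>))"
      using int by (intro nn_integral_eq_integral) auto
    also have "\<dots> = ennreal (mean_level_dist B a)"
      using int by (simp add: mean_level_dist_def abs_dev_def)
    finally show ?thesis using True by simp
  qed (simp add: F_def)
  have slice: "ennreal (rho1 B (X \<omega>)) = (\<integral>\<^sup>+a. F (\<omega>, a) \<partial>lborel)" if \<omega>: "\<omega> \<in> space M" for \<omega>
  proof -
    let ?f = "\<lambda>a. 1/2 * ?d (-1) a \<omega> + 1/2 * ?d 1 a \<omega>"
    have int: "(\<lambda>a. ?d u a \<omega>) integrable_on {0..1}" if "u \<in> {-1, 1}" for u
      using integrable_on_abs_diff_support_profiles[OF support_profile_supp_fun[OF fuzzy_Fc_X[OF \<omega>] that]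
          support_profile_supp_fun[OF B that]]
      by (simp add: sX_def[abs_def])
    have "rho1 B (X \<omega>) = integral {0..1} ?f"
      using int by (simp add: rho1_def sX_def integral_add abs_minus_commute)
    then have "(?f has_integral rho1 B (X \<omega>)) {0..1}"
      using int by (simp add: integrable_integral integrable_add)
    then have "ennreal (rho1 B (X \<omega>)) = (\<integral>\<^sup>+a. ennreal (indicator {0..1} a * ?f a) \<partial>lborel)"
      by (intro nn_integral_has_integral_lebesgue[symmetric]) auto
    also have "\<dots> = (\<integral>\<^sup>+a. F (\<omega>, a) \<partial>lborel)"
      by (intro nn_integral_cong) (simp add: F_def indicator_def clamp01_id)
    finally show ?thesis .
  qed
  have "(\<integral>\<^sup>+\<omega>. ennreal (rho1 B (X \<omega>)) \<partial>M) = (\<integral>\<^sup>+\<omega>. (\<integral>\<^sup>+a. F (\<omega>, a) \<partial>lborel) \<partial>M)"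
    by (intro nn_integral_cong) (simp add: slice)
  also have "\<dots> = (\<integral>\<^sup>+a. (\<integral>\<^sup>+\<omega>. F (\<omega>, a) \<partial>M) \<partial>lborel)"
    using F_meas by (intro P.Fubini'[symmetric]) simp
  finally show "(\<integral>\<^sup>+\<omega>. ennreal (rho1 B (X \<omega>)) \<partial>M)
      = (\<integral>\<^sup>+a. ennreal (indicator {0..1} a * mean_level_dist B a) \<partial>lborel)"
    by (simp add: inner)
  have "(\<lambda>q. F (snd q, fst q)) \<in> borel_measurable (lborel \<Otimes>\<^sub>M M)"
    using measurable_pair_swap[OF F_meas] by (simp add: case_prod_beta')
  from borel_measurable_nn_integral_fst[OF this]
  show "(\<lambda>a. ennreal (indicator {0..1} a * mean_level_dist B a))
      \<in> borel_measurable lborel"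
    by (simp add: inner)
qed

lemma nn_integral_rho1_finite:
  assumes B: "fuzzy_Fc B"
  shows "(\<integral>\<^sup>+\<omega>. ennreal (rho1 B (X \<omega>)) \<partial>M) < \<infinity>"
proof -
  define C where "C = expectation (norm0 X) + Sup (abs ` alpha_level B 0)"
  have abs_dev_le: "abs_dev B u a \<le> C" if u: "u \<in> {-1, 1}" and a: "a \<in> {0..1}" for u a
  proof -
    have "abs_dev B u a \<le> expectation (\<lambda>\<omega>. norm0 X \<omega> + Sup (abs ` alpha_level B 0))"
      unfolding abs_dev_def
    proof (rule integral_mono)
      show "integrable M (\<lambda>\<omega>. \<bar>sX u a \<omega> - supp_fun B u a\<bar>)" using integrable_sX[OF u a] by auto
      show "integrable M (\<lambda>\<omega>. norm0 X \<omega> + Sup (abs ` alpha_level B 0))" using integrable_norm0 by auto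
      fix \<omega> assume "\<omega> \<in> space M"
      then show "\<bar>sX u a \<omega> - supp_fun B u a\<bar> \<le> norm0 X \<omega> + Sup (abs ` alpha_level B 0)"
        using abs_sX_le_norm0[OF _ u a, of \<omega>] abs_supp_fun_le_Sup_abs[OF B u a] by linarith
    qed
    then show ?thesis using integrable_norm0 by (simp add: C_def prob_space)
  qed
  have pointwise: "ennreal (indicator {0..1} a * mean_level_dist B a) \<le> ennreal C * indicator {0..1} a" for a
  proof (cases "a \<in> {0..1}")
    case True
    then have "abs_dev B (-1) a \<le> C" "abs_dev B 1 a \<le> C" using abs_dev_le by auto
    then have "mean_level_dist B a \<le> C" by (simp add: mean_level_dist_def)
    then show ?thesis using True by (simp add: ennreal_leI)
  qed simp
  have "(\<integral>\<^sup>+\<omega>. ennreal (rho1 B (X \<omega>)) \<partial>M) \<le> (\<integral>\<^sup>+a. ennreal C * indicator {0..1::real} a \<partial>lborel)"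
    unfolding nn_integral_rho1(1)[OF B] by (rule nn_integral_mono) (rule pointwise)
  also have "\<dots> < \<infinity>" by (simp add: nn_integral_cmult_indicator)
  finally show ?thesis .
qed

lemma nn_integral_rho1_le_support_median:
  assumes A: "fuzzy_Fc A" "support_median A" and U: "fuzzy_Fc U"
  shows "(\<integral>\<^sup>+\<omega>. ennreal (rho1 A (X \<omega>)) \<partial>M) \<le> (\<integral>\<^sup>+\<omega>. ennreal (rho1 U (X \<omega>)) \<partial>M)"
  unfolding nn_integral_rho1(1)[OF A(1)] nn_integral_rho1(1)[OF U]
proof (rule nn_integral_mono)
  fix a :: real
  show "ennreal (indicator {0..1} a * mean_level_dist A a) \<le> ennreal (indicator {0..1} a * mean_level_dist U a)"
    using mean_level_dist_le_support_median[OF A(2), of a U] by (cases "a \<in> {0..1}") (auto intro: ennreal_leI)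
qed

lemma support_median_if_nn_integral_rho1_le:
  assumes A: "fuzzy_Fc A" and S: "fuzzy_Fc S" "support_median S"
    and le: "(\<integral>\<^sup>+\<omega>. ennreal (rho1 A (X \<omega>)) \<partial>M) \<le> (\<integral>\<^sup>+\<omega>. ennreal (rho1 S (X \<omega>)) \<partial>M)"
  shows "support_median A"
proof -
  let ?D = "\<lambda>B a. ennreal (indicator {0..1} a * mean_level_dist B a)"
  have S_le: "?D S a \<le> ?D A a" for a
    using mean_level_dist_le_support_median[OF S(2), of a A] by (cases "a \<in> {0..1}") (auto intro: ennreal_leI)
  have "AE a in lborel. ?D A a \<le> ?D S a"
  proof (rule ccontr)
    assume "\<not> (AE a in lborel. ?D A a \<le> ?D S a)"
    then have "(\<integral>\<^sup>+a. ?D S a \<partial>lborel) < (\<integral>\<^sup>+a. ?D A a \<partial>lborel)"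
      using nn_integral_rho1[OF S(1)] nn_integral_rho1[OF A] nn_integral_rho1_finite[OF S(1)] S_le
      by (intro nn_integral_less) auto
    then show False using le unfolding nn_integral_rho1(1)[OF A] nn_integral_rho1(1)[OF S(1)] by simp
  qed
  then have ae: "AE a in lborel. a \<in> {0..1} \<longrightarrow> median (sX u a) (supp_fun A u a)" if u: "u \<in> {-1, 1}" for u
  proof (rule AE_mp, intro AE_I2 impI)
    fix a assume D: "?D A a \<le> ?D S a" and a: "a \<in> {0..1}"
    have nonneg: "0 \<le> abs_dev B v a" for B v by (simp add: abs_dev_def)
    have "abs_dev S (-1) a \<le> abs_dev A (-1) a" "abs_dev S 1 a \<le> abs_dev A 1 a"
      using abs_dev_le_support_median[OF S(2) _ a] by auto
    moreover have "mean_level_dist A a \<le> mean_level_dist S a"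
      using D a nonneg by (simp add: mean_level_dist_def ennreal_le_iff add_nonneg_nonneg)
    ultimately have "abs_dev A u a \<le> abs_dev S u a" using u by (auto simp: mean_level_dist_def)
    moreover have "median (sX u a) (supp_fun S u a)" using S(2) u a unfolding support_median_def by blast
    ultimately show "median (sX u a) (supp_fun A u a)"
      using median_if_abs_dev_le[OF integrable_sX[OF u a]] by (simp add: abs_dev_def)
  qed
  show ?thesis
    unfolding support_median_def
  proof (intro ballI)
    fix u a :: real assume u: "u \<in> {-1, 1}" and a: "a \<in> {0..1}"
    show "median (sX u a) (supp_fun A u a)"
      using random_profile.median_if_dense[OF random_profile_sX[OF u] support_profile_supp_fun[OF A u]
          ex_in_interval_if_AE[OF ae[OF u]] a] .
  qed
qed

lemma Med_D_FT: "Med (D_FT M X) = {A. fuzzy_Fc A \<and> support_median A}"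
proof (rule Med_eq_if_maximisers[OF ex_support_median])
  show "D_FT M X U \<le> D_FT M X A" if "support_median A" for A U
    using D_FT_le_support_median[OF that] .
  show "support_median A" if "support_median S" "D_FT M X S \<le> D_FT M X A" for A S
    using order_trans[OF half_le_D_FT_iff[THEN iffD2, OF that(1)] that(2)] half_le_D_FT_iff by blast
qed

lemma Med_D1: "Med (D1 M X) = {A. fuzzy_Fc A \<and> support_median A}"
proof (rule Med_eq_if_maximisers[OF ex_support_median])
  show "D1 M X U \<le> D1 M X A" if "fuzzy_Fc A" "support_median A" "fuzzy_Fc U" for A U
    using nn_integral_rho1_le_support_median[OF that] by (simp add: D1_def inverse_one_plus_le_iff)
  show "support_median A" if "fuzzy_Fc A" "fuzzy_Fc S" "support_median S" "D1 M X S \<le> D1 M X A" for A S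
    by (rule support_median_if_nn_integral_rho1_le) (use that in \<open>simp_all add: D1_def inverse_one_plus_le_iff\<close>)
qed

end

theorem corollary4p5:
  fixes M :: "'a measure" and X :: "'a \<Rightarrow> real \<Rightarrow> real"
  assumes "prob_space M"
    and "fuzzy_rv M X"
    and "(\<integral>\<^sup>+ \<omega>. ennreal (norm0 X \<omega>) \<partial>M) < \<infinity>"
  shows "Med (D1 M X) = Med (D_FT M X)"
proof -
  interpret integrable_fuzzy_rv M X
    using assms by (simp add: integrable_fuzzy_rv_def integrable_fuzzy_rv_axioms_def)
  show ?thesis by (simp add: Med_D1 Med_D_FT)
qed

end
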